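(* Let $\ell:\mathcal{Z}\times\mathbb{R}^d\to[0,\infty)$ be a non-negative loss, differentiable in the parameter $\Theta\in\mathbb{R}^d$. Let $(p^t)_{t\ge0}$ and $p^*$ be probability densities on $\mathcal{Z}$, and set $c^t\triangleq\int|p^t(z)-p^*(z)|\,dz$. Define the expected risk $\mathcal{L}(\Theta)\triangleq\mathbb{E}_{Z\sim p^*}[\ell(Z;\Theta)]$. Consider the stochastic gradient iteration $$\Theta^{t+1}=\Theta^t-\eta_t\nabla_{\Theta}\ell(Z^t;\Theta^t),$$ where $\eta_t>0$ are step sizes, $\Theta^0$ is an initial (possibly random) parameter, and, conditionally on the past $(\Theta^0,Z^0,\dots,Z^{t-1})$, the sample $Z^t$ has density $p^t$. Assume: (A1) ($L$-smoothness) $\mathcal{L}$ is differentiable and $\nabla\mathcal{L}$ is $L$-Lipschitz; (A3) (finite variance) there is $G>0$ such that for all $t$ and all $\Theta$, $\mathbb{E}_{Z\sim p^t}\big[\Vert\nabla_{\Theta}\ell(Z;\Theta)\Vert^2\big]\le G$; (A4) $\sum_t c^t<\infty$. Then for every $t$, $$\mathbb{E}[\mathcal{L}(\Theta^{t+1})]\le\mathbb{E}[\mathcal{L}(\Theta^{t})]-\eta_t\Big(\mathbb{E}\big[\Vert\nabla\mathcal{L}(\Theta^t)\Vert^2\big]-\sqrt{2}\,G\sqrt{c^t}\Big)+\frac{LG}{2}\eta_t^2,$$ where the expectations are taken over all random variables.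
   Context: This is the setting of a single module $j>1$ in a layer-wise ("greedy") training scheme trained in parallel with the preceding modules: $p^t$ is the time-varying density of the input sample $Z=(X,Y)$ fed to the module at step $t$, $p^*$ is the density of the previous module's output at convergence, and $\Theta$ collects the module's parameters and those of its auxiliary network. *)

theory Defs
  imports "HOL-Probability.Probability"
begin

definition risk :: "('z \<Rightarrow> 'a \<Rightarrow> real) \<Rightarrow> 'z measure \<Rightarrow> ('z \<Rightarrow> real) \<Rightarrow> 'a \<Rightarrow> real" where
  "risk l MZ pstar \<theta> = (\<integral>z. l z \<theta> * pstar z \<partial>MZ)"

definition l1_dist :: "'z measure \<Rightarrow> ('z \<Rightarrow> real) \<Rightarrow> ('z \<Rightarrow> real) \<Rightarrow> real" where
  "l1_dist MZ p q = (\<integral>z. \<bar>p z - q z\<bar> \<partial>MZ)"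

definition is_density :: "'z measure \<Rightarrow> ('z \<Rightarrow> real) \<Rightarrow> bool" where
  "is_density MZ p \<longleftrightarrow> p \<in> borel_measurable MZ \<and> (\<forall>z\<in>space MZ. 0 \<le> p z)
     \<and> (\<integral>\<^sup>+ z. ennreal (p z) \<partial>MZ) = 1"

definition past_events :: "'w measure \<Rightarrow> ('w \<Rightarrow> 'a::topological_space) \<Rightarrow> 'z measure \<Rightarrow> (nat \<Rightarrow> 'w \<Rightarrow> 'z) \<Rightarrow> nat \<Rightarrow> 'w set set" where
  "past_events M Theta0 MZ Z t = sigma_sets (space M)
     ({Theta0 -` A \<inter> space M | A. A \<in> sets borel}
      \<union> (\<Union>i<t. {Z i -` B \<inter> space M | B. B \<in> sets MZ}))"

end

theory Submission
  imports Defs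
begin

(*
  By the descent lemma for the L-smooth risk R, one step Theta' = Theta - eta g with
  g = grad l(Z; Theta) satisfies
    R(Theta') <= R(Theta) - eta <grad R(Theta), g> + L eta^2/2 |g|^2.
  The iterate Theta^t is measurable with respect to the past, on which Z^t has the
  conditional density p^t, so the expectation of R(Theta^(t+1)) is the expectation over
  Theta^t of the p^t-average of the right-hand side at a fixed Theta.

  The gradient of the risk is not assumed to be the p*-mean of grad l: this follows by
  differentiating under the integral sign, the difference quotients being uniformly
  integrable thanks to the second-moment bound (A3). That bound holds for p* as well,
  since p^s -> p* in L1 by (A4). Hence <grad R, g> averaged against p^t differs from
  |grad R|^2 by at most |grad R| * int |g| |p^t - p*| <= sqrt G * sqrt (2 G c^t), by
  Cauchy-Schwarz with weight |p^t - p*|, while the p^t-average of |g|^2 is at most G.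
*)

section \<open>Measurability of gradients\<close>

lemma borel_measurable_caratheodory:
  fixes f :: "'z \<Rightarrow> 'a::{real_normed_vector, second_countable_topology} \<Rightarrow> 'b::metric_space"
  assumes meas: "\<And>\<theta>. (\<lambda>z. f z \<theta>) \<in> borel_measurable MZ"
    and cont: "\<And>z. continuous_on UNIV (f z)"
  shows "(\<lambda>x. f (fst x) (snd x)) \<in> borel_measurable (MZ \<Otimes>\<^sub>M borel)"
proof -
  obtain F where F: "\<And>i. simple_function (borel::'a measure) (F i)" "\<And>x. (\<lambda>i. F i x) \<longlonglongrightarrow> x"
    using borel_measurable_implies_sequence_metric[of "\<lambda>x. x" "borel::'a measure" 0] by auto
  have "(\<lambda>x. f (fst x) (F i (snd x))) \<in> borel_measurable (MZ \<Otimes>\<^sub>M borel)" for i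
  proof (rule measurable_compose_countable'[where I="range (F i)" and f="\<lambda>c x. f (fst x) c"])
    show "(\<lambda>x. f (fst x) c) \<in> borel_measurable (MZ \<Otimes>\<^sub>M borel)" for c
      by (rule measurable_compose[OF measurable_fst meas])
    have fin: "finite (range (F i))"
      using F(1)[of i] by (simp add: simple_function_def)
    have "F i \<in> measurable borel (count_space (range (F i)))"
      unfolding measurable_count_space_eq2[OF fin]
      using measurable_sets[OF measurable_simple_function[OF F(1)[of i]]] by auto
    then show "(\<lambda>x. F i (snd x)) \<in> measurable (MZ \<Otimes>\<^sub>M borel) (count_space (range (F i)))"
      by (rule measurable_compose[OF measurable_snd])
    show "countable (range (F i))"
      using fin by (rule countable_finite)
  qed
  then show ?thesis
    by (rule borel_measurable_LIMSEQ_metric)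
      (use continuous_on_tendsto_compose[OF cont F(2)] in auto)
qed

lemma has_derivative_directional_LIMSEQ:
  fixes F :: "'a::real_normed_vector \<Rightarrow> real"
  assumes "(F has_derivative D) (at x)"
  shows "(\<lambda>n. (F (x + (1 / real (Suc n)) *\<^sub>R v) - F x) / (1 / real (Suc n))) \<longlonglongrightarrow> D v"
proof -
  have "((\<lambda>t::real. x + t *\<^sub>R v) has_derivative (\<lambda>t. t *\<^sub>R v)) (at 0)"
    by (auto intro!: derivative_eq_intros)
  from has_derivative_compose[OF this] assms
  have "((\<lambda>t. F (x + t *\<^sub>R v)) has_derivative (\<lambda>t. D (t *\<^sub>R v))) (at 0)"
    by simp
  moreover have "(\<lambda>t. D (t *\<^sub>R v)) = (*) (D v)"
    using linear_scale[OF has_derivative_linear[OF assms]] by (auto simp: mult.commute)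
  ultimately have "((\<lambda>t. F (x + t *\<^sub>R v)) has_field_derivative D v) (at 0)"
    by (simp add: has_field_derivative_def)
  then have "((\<lambda>h. (F (x + h *\<^sub>R v) - F x) / h) \<longlongrightarrow> D v) (at 0)"
    unfolding DERIV_def by simp
  then have "\<forall>S. (\<forall>n. S n \<noteq> 0) \<and> S \<longlonglongrightarrow> 0 \<longrightarrow> (\<lambda>n. (F (x + S n *\<^sub>R v) - F x) / S n) \<longlonglongrightarrow> D v"
    unfolding LIMSEQ_SEQ_conv[symmetric] by simp
  from this[rule_format, of "\<lambda>n. 1 / real (Suc n)"] show ?thesis
    using LIMSEQ_Suc[OF lim_inverse_n'] by simp
qed

lemma borel_measurable_gradient:
  fixes f :: "'z \<Rightarrow> 'a::euclidean_space \<Rightarrow> real"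
  assumes meas: "\<And>\<theta>. (\<lambda>z. f z \<theta>) \<in> borel_measurable MZ"
    and deriv: "\<And>z \<theta>. (f z has_derivative (\<lambda>h. gf z \<theta> \<bullet> h)) (at \<theta>)"
  shows "(\<lambda>x. gf (fst x) (snd x)) \<in> borel_measurable (MZ \<Otimes>\<^sub>M borel)"
proof -
  have f_joint: "(\<lambda>x. f (fst x) (snd x)) \<in> borel_measurable (MZ \<Otimes>\<^sub>M borel)"
    by (intro borel_measurable_caratheodory[OF meas] continuous_at_imp_continuous_on ballI
        has_derivative_continuous[OF deriv])
  have "(\<lambda>x. gf (fst x) (snd x) \<bullet> b) \<in> borel_measurable (MZ \<Otimes>\<^sub>M borel)" for b
  proof (rule borel_measurable_LIMSEQ_real)
    fix n
    have "(\<lambda>x. (fst x, snd x + (1 / real (Suc n)) *\<^sub>R b)) \<in> measurable (MZ \<Otimes>\<^sub>M borel) (MZ \<Otimes>\<^sub>M (borel::'a measure))"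
      by measurable
    from measurable_compose[OF this f_joint]
    have "(\<lambda>x. f (fst x) (snd x + (1 / real (Suc n)) *\<^sub>R b)) \<in> borel_measurable (MZ \<Otimes>\<^sub>M borel)"
      by simp
    then show "(\<lambda>x. (f (fst x) (snd x + (1 / real (Suc n)) *\<^sub>R b) - f (fst x) (snd x)) / (1 / real (Suc n)))
        \<in> borel_measurable (MZ \<Otimes>\<^sub>M borel)"
      using f_joint by measurable
  qed (rule has_derivative_directional_LIMSEQ[OF deriv])
  then show ?thesis
    using borel_measurable_euclidean_space by blast
qed

lemma borel_measurable_gradient_at:
  fixes f :: "'z \<Rightarrow> 'a::euclidean_space \<Rightarrow> real"
  assumes "\<And>\<theta>. (\<lambda>z. f z \<theta>) \<in> borel_measurable MZ"
    and "\<And>z \<theta>. (f z has_derivative (\<lambda>h. gf z \<theta> \<bullet> h)) (at \<theta>)"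
  shows "(\<lambda>z. gf z \<theta>) \<in> borel_measurable MZ"
  using measurable_compose[OF measurable_Pair[OF measurable_ident_sets[OF refl] measurable_const[of \<theta>]]
      borel_measurable_gradient[OF assms]]
  by simp

lemma abs_le_amgm:
  fixes x t :: real
  assumes "0 < t"
  shows "\<bar>x\<bar> \<le> (t * x\<^sup>2 + 1 / t) / 2"
proof -
  have "0 \<le> (t * \<bar>x\<bar> - 1)\<^sup>2"
    by simp
  then have "2 * (t * \<bar>x\<bar>) \<le> t\<^sup>2 * x\<^sup>2 + 1"
    by (simp add: power2_diff power_mult_distrib)
  then show ?thesis
    using assms by (simp add: field_simps power2_eq_square)
qed

lemma le_sqrt_mult_if_le_amgm:
  fixes a c x :: real
  assumes "0 \<le> a" "0 \<le> c" and amgm: "\<And>t. 0 < t \<Longrightarrow> x \<le> (a * t + c / t) / 2"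
  shows "x \<le> sqrt (a * c)"
proof (cases "0 < a \<and> 0 < c")
  case True
  define t where "t = sqrt (c / a)"
  have "0 < t"
    using True by (simp add: t_def)
  moreover have "a * t = sqrt (a * c)" "c / t = sqrt (a * c)"
    using True unfolding t_def
    by (auto simp: real_sqrt_divide real_sqrt_mult real_div_sqrt field_simps)
  ultimately show ?thesis
    using amgm by fastforce
next
  case False
  then have "a = 0 \<or> c = 0"
    using assms by auto
  show ?thesis
  proof (rule ccontr)
    assume "\<not> x \<le> sqrt (a * c)"
    then have "0 < x"
      using \<open>a = 0 \<or> c = 0\<close> by auto
    show False
    proof (cases "a = 0")
      case True
      have "x \<le> (c / ((c + 1) / x)) / 2"
        using amgm[of "(c + 1) / x"] True \<open>0 < x\<close> \<open>0 \<le> c\<close> by simp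
      also have "\<dots> < x"
        using \<open>0 < x\<close> \<open>0 \<le> c\<close> by (simp add: field_simps) (smt (verit) mult_nonneg_nonneg)
      finally show False
        by simp
    next
      case False
      then have "c = 0"
        using \<open>a = 0 \<or> c = 0\<close> by simp
      have "x \<le> (a * (x / (a + 1))) / 2"
        using amgm[of "x / (a + 1)"] \<open>c = 0\<close> \<open>0 < x\<close> \<open>0 \<le> a\<close> by simp
      also have "\<dots> < x"
        using \<open>0 < x\<close> \<open>0 \<le> a\<close> by (simp add: field_simps) (smt (verit) mult_nonneg_nonneg)
      finally show False
        by simp
    qed
  qed
qed

lemma has_vector_derivative_along_line:
  fixes f :: "'a::real_inner \<Rightarrow> real"
  assumes "\<And>\<theta>. (f has_derivative (\<lambda>h. gf \<theta> \<bullet> h)) (at \<theta>)"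
  shows "((\<lambda>s. f (x + s *\<^sub>R v)) has_vector_derivative (gf (x + s *\<^sub>R v) \<bullet> v)) (at s within S)"
proof -
  have "((\<lambda>s::real. x + s *\<^sub>R v) has_derivative (\<lambda>s. s *\<^sub>R v)) (at s)"
    by (auto intro!: derivative_eq_intros)
  from has_derivative_compose[OF this assms]
  show ?thesis
    unfolding has_vector_derivative_def
    by (auto intro: has_derivative_at_withinI simp: mult.commute)
qed

lemma descent_lemma:
  fixes R :: "'a::real_inner \<Rightarrow> real"
  assumes deriv: "\<And>\<theta>. (R has_derivative (\<lambda>h. gR \<theta> \<bullet> h)) (at \<theta>)"
    and lip: "L-lipschitz_on UNIV gR"
  shows "R y \<le> R x + gR x \<bullet> (y - x) + L / 2 * (norm (y - x))\<^sup>2"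
proof -
  define v where "v = y - x"
  have "((\<lambda>s. gR (x + s *\<^sub>R v) \<bullet> v) has_integral (R (x + 1 *\<^sub>R v) - R (x + 0 *\<^sub>R v))) {0..1}"
    by (intro fundamental_theorem_of_calculus has_vector_derivative_along_line[OF deriv]) auto
  moreover have "((\<lambda>s. gR x \<bullet> v + L * s * (norm v)\<^sup>2) has_integral
      ((1 * (gR x \<bullet> v) + L * (norm v)\<^sup>2 / 2 * 1\<^sup>2) - (0 * (gR x \<bullet> v) + L * (norm v)\<^sup>2 / 2 * 0\<^sup>2))) {0..1}"
    by (intro fundamental_theorem_of_calculus)
      (auto intro!: derivative_eq_intros simp: algebra_simps power2_eq_square)
  moreover have "gR (x + s *\<^sub>R v) \<bullet> v \<le> gR x \<bullet> v + L * s * (norm v)\<^sup>2" if "s \<in> {0..1}" for s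
  proof -
    have "gR (x + s *\<^sub>R v) \<bullet> v - gR x \<bullet> v \<le> norm (gR (x + s *\<^sub>R v) - gR x) * norm v"
      by (metis inner_diff_left norm_cauchy_schwarz)
    also have "\<dots> \<le> L * norm (s *\<^sub>R v) * norm v"
      using lip unfolding lipschitz_on_def
      by (intro mult_right_mono) (metis UNIV_I dist_norm add_diff_cancel_left', simp)
    also have "\<dots> = L * s * (norm v)\<^sup>2"
      using that by (simp add: power2_eq_square)
    finally show ?thesis
      by simp
  qed
  ultimately have "R (x + 1 *\<^sub>R v) - R (x + 0 *\<^sub>R v)
      \<le> (1 * (gR x \<bullet> v) + L * (norm v)\<^sup>2 / 2 * 1\<^sup>2) - (0 * (gR x \<bullet> v) + L * (norm v)\<^sup>2 / 2 * 0\<^sup>2)"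
    by (rule has_integral_le)
  then show ?thesis
    unfolding v_def by simp
qed

text \<open>The integral given by the fundamental theorem of calculus need not converge absolutely,
  so Cauchy--Schwarz is derived pointwise from \<open>\<bar>\<phi>\<bar> \<le> (t \<phi>\<^sup>2 + 1/t)/2\<close> and optimised over \<open>t\<close>.\<close>
lemma sq_increment_le_integral_sq_derivative:
  fixes f :: "'a::real_inner \<Rightarrow> real"
  assumes deriv: "\<And>\<theta>. (f has_derivative (\<lambda>h. gf \<theta> \<bullet> h)) (at \<theta>)"
    and meas: "(\<lambda>s. gf (x + s *\<^sub>R v) \<bullet> v) \<in> borel_measurable borel"
    and "0 < h"
  shows "ennreal ((f (x + h *\<^sub>R v) - f x)\<^sup>2)
     \<le> ennreal h * (\<integral>\<^sup>+ s. ennreal ((gf (x + s *\<^sub>R v) \<bullet> v)\<^sup>2 * indicator {0..h} s) \<partial>lborel)"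
proof -
  define \<phi> where "\<phi> s = gf (x + s *\<^sub>R v) \<bullet> v" for s
  define \<Delta> where "\<Delta> = f (x + h *\<^sub>R v) - f x"
  have "(\<phi> has_integral (f (x + h *\<^sub>R v) - f (x + 0 *\<^sub>R v))) {0..h}"
    unfolding \<phi>_def
    by (intro fundamental_theorem_of_calculus has_vector_derivative_along_line[OF deriv])
      (use \<open>0 < h\<close> in auto)
  then have int_\<phi>: "(\<phi> has_integral \<Delta>) {0..h}"
    by (simp add: \<Delta>_def)
  define I where "I = (\<integral>\<^sup>+ s. ennreal ((\<phi> s)\<^sup>2 * indicator {0..h} s) \<partial>lborel)"
  show ?thesis
  proof (cases I rule: ennreal_cases)
    case top
    then show ?thesis
      using \<open>0 < h\<close> by (simp add: I_def \<phi>_def ennreal_mult_top)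
  next
    case (real A)
    then have A: "(\<integral>\<^sup>+ s. ennreal ((\<phi> s)\<^sup>2 * indicator {0..h} s) \<partial>lborel) = ennreal A" "0 \<le> A"
      by (simp_all add: I_def)
    have "((\<lambda>s. (\<phi> s)\<^sup>2 * indicator {0..h} s) has_integral A) UNIV"
      by (rule nn_integral_has_integral) (use A meas in \<open>auto simp: \<phi>_def\<close>)
    moreover have "(\<lambda>s. (\<phi> s)\<^sup>2 * indicator {0..h} s) = (\<lambda>s. if s \<in> {0..h} then (\<phi> s)\<^sup>2 else 0)"
      by (simp add: indicator_def fun_eq_iff)
    ultimately have int_sq: "((\<lambda>s. (\<phi> s)\<^sup>2) has_integral A) {0..h}"
      using has_integral_restrict_UNIV[of "{0..h}" "\<lambda>s. (\<phi> s)\<^sup>2" A] by simp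
    have "\<bar>\<Delta>\<bar> \<le> (A * t + h / t) / 2" if "0 < t" for t
    proof -
      have bound_int: "((\<lambda>s. (t * (\<phi> s)\<^sup>2 + 1 / t) / 2) has_integral ((A * t + h / t) / 2)) {0..h}"
        using has_integral_mult_left[OF has_integral_add[OF has_integral_mult_right[OF int_sq, of t]
            has_integral_const_real[of "1 / t" 0 h]], of "1 / 2"] \<open>0 < h\<close>
        by (simp add: field_simps)
      have "\<Delta> \<le> (A * t + h / t) / 2"
        by (intro has_integral_le[OF int_\<phi> bound_int] abs_le_D1[OF abs_le_amgm[OF that]])
      moreover have "- \<Delta> \<le> (A * t + h / t) / 2"
        by (intro has_integral_le[OF has_integral_neg[OF int_\<phi>] bound_int] abs_le_D2[OF abs_le_amgm[OF that]])
      ultimately show ?thesis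
        by linarith
    qed
    then have "\<bar>\<Delta>\<bar> \<le> sqrt (A * h)"
      by (intro le_sqrt_mult_if_le_amgm) (use A \<open>0 < h\<close> in auto)
    then have "\<Delta>\<^sup>2 \<le> A * h"
      using A(2) \<open>0 < h\<close> by (metis abs_ge_zero power2_abs power_mono real_sqrt_pow2 zero_le_mult_iff less_imp_le)
    then have "ennreal (\<Delta>\<^sup>2) \<le> ennreal h * ennreal A"
      using A(2) \<open>0 < h\<close> by (simp add: ennreal_mult'[symmetric] mult.commute)
    then show ?thesis
      using A(1) unfolding \<Delta>_def \<phi>_def by simp
  qed
qed

section \<open>Densities and integrals\<close>

lemma is_densityD:
  assumes "is_density MZ q"
  shows "q \<in> borel_measurable MZ" "\<And>z. z \<in> space MZ \<Longrightarrow> 0 \<le> q z"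
    "integrable MZ q" "(\<integral>z. q z \<partial>MZ) = 1"
proof -
  show q_meas: "q \<in> borel_measurable MZ" and q_nonneg: "\<And>z. z \<in> space MZ \<Longrightarrow> 0 \<le> q z"
    using assms by (auto simp: is_density_def)
  have q_one: "(\<integral>\<^sup>+ z. ennreal (q z) \<partial>MZ) = 1"
    using assms by (simp add: is_density_def)
  show q_int: "integrable MZ q"
    by (rule integrableI_nonneg) (use q_meas q_nonneg q_one in auto)
  have "ennreal (\<integral>z. q z \<partial>MZ) = 1"
    using nn_integral_eq_integral[OF q_int] q_nonneg q_one by simp
  then show "(\<integral>z. q z \<partial>MZ) = 1"
    by (metis ennreal_1 ennreal_eq_1)
qed

lemma prob_space_density_is_density:
  assumes "is_density MZ q"
  shows "prob_space (density MZ (\<lambda>z. ennreal (q z)))"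
proof (rule prob_spaceI)
  have "emeasure (density MZ (\<lambda>z. ennreal (q z))) (space MZ) = (\<integral>\<^sup>+ z. ennreal (q z) * indicator (space MZ) z \<partial>MZ)"
    using is_densityD(1)[OF assms] by (intro emeasure_density) auto
  also have "\<dots> = (\<integral>\<^sup>+ z. ennreal (q z) \<partial>MZ)"
    by (intro nn_integral_cong) auto
  finally show "emeasure (density MZ (\<lambda>z. ennreal (q z))) (space (density MZ (\<lambda>z. ennreal (q z)))) = 1"
    using assms by (simp add: is_density_def)
qed

lemma nn_integral_abs_diff_eq_l1_dist:
  assumes "is_density MZ p" "is_density MZ q"
  shows "(\<integral>\<^sup>+ z. ennreal \<bar>p z - q z\<bar> \<partial>MZ) = ennreal (l1_dist MZ p q)"
  unfolding l1_dist_def using is_densityD[OF assms(1)] is_densityD[OF assms(2)]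
  by (intro nn_integral_eq_integral) auto

lemma integrable_nonneg_of_nn_integral_le:
  fixes f :: "'z \<Rightarrow> real"
  assumes "f \<in> borel_measurable M" "\<And>z. z \<in> space M \<Longrightarrow> 0 \<le> f z"
    and bound: "(\<integral>\<^sup>+ z. ennreal (f z) \<partial>M) \<le> ennreal B" and "0 \<le> B"
  shows "integrable M f" "(\<integral>z. f z \<partial>M) \<le> B"
proof -
  show f_int: "integrable M f"
    by (rule integrableI_nonneg) (use assms le_less_trans[OF bound] in auto)
  have "ennreal (\<integral>z. f z \<partial>M) = (\<integral>\<^sup>+ z. ennreal (f z) \<partial>M)"
    using assms(2) by (intro nn_integral_eq_integral[OF f_int, symmetric]) auto
  then show "(\<integral>z. f z \<partial>M) \<le> B"
    using bound \<open>0 \<le> B\<close> by (metis ennreal_le_iff)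
qed

lemma integral_abs_mult_le_sqrt:
  fixes a w :: "'z \<Rightarrow> real"
  assumes a_meas: "a \<in> borel_measurable M" and w_nonneg: "\<And>z. z \<in> space M \<Longrightarrow> 0 \<le> w z"
    and w_int: "integrable M w" and aw_int: "integrable M (\<lambda>z. (a z)\<^sup>2 * w z)"
  shows "integrable M (\<lambda>z. \<bar>a z\<bar> * w z)"
    and "(\<integral>z. \<bar>a z\<bar> * w z \<partial>M) \<le> sqrt ((\<integral>z. (a z)\<^sup>2 * w z \<partial>M) * (\<integral>z. w z \<partial>M))"
proof -
  have amgm: "\<bar>a z\<bar> * w z \<le> (t * ((a z)\<^sup>2 * w z) + w z / t) / 2" if "0 < t" "z \<in> space M" for t z
  proof -
    have "\<bar>a z\<bar> * w z \<le> (t * (a z)\<^sup>2 + 1 / t) / 2 * w z"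
      using abs_le_amgm[OF \<open>0 < t\<close>] w_nonneg[OF \<open>z \<in> space M\<close>] by (rule mult_right_mono)
    then show ?thesis
      by (simp add: field_simps)
  qed
  have w_meas: "w \<in> borel_measurable M"
    using w_int by (rule borel_measurable_integrable)
  show abs_aw_int: "integrable M (\<lambda>z. \<bar>a z\<bar> * w z)"
  proof (rule Bochner_Integration.integrable_bound)
    show "integrable M (\<lambda>z. (1 * ((a z)\<^sup>2 * w z) + w z / 1) / 2)"
      using aw_int w_int by simp
    show "(\<lambda>z. \<bar>a z\<bar> * w z) \<in> borel_measurable M"
      using a_meas w_meas by measurable
    show "AE z in M. norm (\<bar>a z\<bar> * w z) \<le> norm ((1 * ((a z)\<^sup>2 * w z) + w z / 1) / 2)"
    proof (rule AE_I2)
      fix z assume "z \<in> space M"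
      then have "0 \<le> \<bar>a z\<bar> * w z" "\<bar>a z\<bar> * w z \<le> (1 * ((a z)\<^sup>2 * w z) + w z / 1) / 2"
        using amgm[of 1 z] w_nonneg by auto
      then show "norm (\<bar>a z\<bar> * w z) \<le> norm ((1 * ((a z)\<^sup>2 * w z) + w z / 1) / 2)"
        by simp
    qed
  qed
  have "(\<integral>z. \<bar>a z\<bar> * w z \<partial>M) \<le> ((\<integral>z. (a z)\<^sup>2 * w z \<partial>M) * t + (\<integral>z. w z \<partial>M) / t) / 2"
    if "0 < t" for t
  proof -
    have "(\<integral>z. \<bar>a z\<bar> * w z \<partial>M) \<le> (\<integral>z. (t * ((a z)\<^sup>2 * w z) + w z / t) / 2 \<partial>M)"
      using abs_aw_int aw_int w_int amgm[OF that] by (intro integral_mono) auto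
    also have "\<dots> = ((\<integral>z. (a z)\<^sup>2 * w z \<partial>M) * t + (\<integral>z. w z \<partial>M) / t) / 2"
      using aw_int w_int by (simp add: mult.commute)
    finally show ?thesis .
  qed
  then show "(\<integral>z. \<bar>a z\<bar> * w z \<partial>M) \<le> sqrt ((\<integral>z. (a z)\<^sup>2 * w z \<partial>M) * (\<integral>z. w z \<partial>M))"
    using w_nonneg by (intro le_sqrt_mult_if_le_amgm integral_nonneg_AE AE_I2) auto
qed

lemma density_second_moment:
  fixes g :: "'z \<Rightarrow> 'a::euclidean_space"
  assumes dens: "is_density MZ w" and g_meas: "g \<in> borel_measurable MZ"
    and sq: "(\<integral>\<^sup>+ z. ennreal ((norm (g z))\<^sup>2 * w z) \<partial>MZ) \<le> ennreal G" and "0 \<le> G"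
  shows "integrable MZ (\<lambda>z. (norm (g z))\<^sup>2 * w z)" "(\<integral>z. (norm (g z))\<^sup>2 * w z \<partial>MZ) \<le> G"
    and "integrable MZ (\<lambda>z. norm (g z) * w z)" "(\<integral>z. norm (g z) * w z \<partial>MZ) \<le> sqrt G"
    and "integrable MZ (\<lambda>z. (u \<bullet> g z) * w z)"
proof -
  note wD = is_densityD[OF dens]
  have [measurable]: "w \<in> borel_measurable MZ"
    by (rule wD(1))
  have norm_meas: "(\<lambda>z. norm (g z)) \<in> borel_measurable MZ"
    using g_meas by measurable
  have "(\<lambda>z. (norm (g z))\<^sup>2 * w z) \<in> borel_measurable MZ"
    using g_meas by measurable
  from integrable_nonneg_of_nn_integral_le[OF this _ sq \<open>0 \<le> G\<close>]
  show sq_int: "integrable MZ (\<lambda>z. (norm (g z))\<^sup>2 * w z)"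
    and sq_le: "(\<integral>z. (norm (g z))\<^sup>2 * w z \<partial>MZ) \<le> G"
    using wD(2) by auto
  show norm_int: "integrable MZ (\<lambda>z. norm (g z) * w z)"
    using integral_abs_mult_le_sqrt(1)[OF norm_meas wD(2,3)] sq_int by simp
  have "(\<integral>z. norm (g z) * w z \<partial>MZ) \<le> sqrt ((\<integral>z. (norm (g z))\<^sup>2 * w z \<partial>MZ) * (\<integral>z. w z \<partial>MZ))"
    using integral_abs_mult_le_sqrt(2)[OF norm_meas wD(2,3)] sq_int by simp
  also have "\<dots> \<le> sqrt G"
    using sq_le wD(4) by simp
  finally show "(\<integral>z. norm (g z) * w z \<partial>MZ) \<le> sqrt G" .
  show "integrable MZ (\<lambda>z. (u \<bullet> g z) * w z)"
  proof (rule Bochner_Integration.integrable_bound)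
    show "integrable MZ (\<lambda>z. norm u * (norm (g z) * w z))"
      using norm_int by simp
    show "(\<lambda>z. (u \<bullet> g z) * w z) \<in> borel_measurable MZ"
      using g_meas by measurable
    show "AE z in MZ. norm ((u \<bullet> g z) * w z) \<le> norm (norm u * (norm (g z) * w z))"
    proof (rule AE_I2)
      fix z assume "z \<in> space MZ"
      have "\<bar>u \<bullet> g z\<bar> * w z \<le> (norm u * norm (g z)) * w z"
        using Cauchy_Schwarz_ineq2 wD(2)[OF \<open>z \<in> space MZ\<close>] by (rule mult_right_mono)
      then show "norm ((u \<bullet> g z) * w z) \<le> norm (norm u * (norm (g z) * w z))"
        using wD(2)[OF \<open>z \<in> space MZ\<close>] by (simp add: abs_mult mult_ac)
    qed
  qed
qed

lemma integral_le_integral_min_plus_sq: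
  fixes e :: "'z \<Rightarrow> real"
  assumes e_int: "integrable M e" and e_sq_int: "integrable M (\<lambda>z. (e z)\<^sup>2)"
    and e_nonneg: "\<And>z. z \<in> space M \<Longrightarrow> 0 \<le> e z" and "0 < K"
  shows "(\<integral>z. e z \<partial>M) \<le> (\<integral>z. min (e z) K \<partial>M) + (\<integral>z. (e z)\<^sup>2 \<partial>M) / K"
proof -
  have min_int: "integrable M (\<lambda>z. min (e z) K)"
    using e_int e_nonneg \<open>0 < K\<close> by (intro Bochner_Integration.integrable_bound[OF e_int]) (auto intro!: AE_I2)
  have "e z \<le> min (e z) K + (e z)\<^sup>2 / K" if "z \<in> space M" for z
  proof (cases "e z \<le> K")
    case False
    then have "e z \<le> (e z)\<^sup>2 / K"
      using \<open>0 < K\<close> by (simp add: power2_eq_square field_simps)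
    then show ?thesis
      using False \<open>0 < K\<close> by simp
  qed (use \<open>0 < K\<close> e_nonneg[OF that] in simp)
  then have "(\<integral>z. e z \<partial>M) \<le> (\<integral>z. min (e z) K + (e z)\<^sup>2 / K \<partial>M)"
    using e_int min_int e_sq_int by (intro integral_mono) auto
  also have "\<dots> = (\<integral>z. min (e z) K \<partial>M) + (\<integral>z. (e z)\<^sup>2 \<partial>M) / K"
    using min_int e_sq_int by simp
  finally show ?thesis .
qed

text \<open>Uniform integrability: truncating \<open>\<bar>f n - g\<bar>\<close> at level \<open>K\<close> costs at most \<open>4 B / K\<close>.\<close>
lemma (in finite_measure) LIMSEQ_integral_of_sq_bounded:
  fixes f :: "nat \<Rightarrow> 'a \<Rightarrow> real" and g :: "'a \<Rightarrow> real"
  assumes f_meas: "\<And>n. f n \<in> borel_measurable M" and g_meas: "g \<in> borel_measurable M"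
    and lim: "\<And>z. z \<in> space M \<Longrightarrow> (\<lambda>n. f n z) \<longlonglongrightarrow> g z"
    and f_sq: "\<And>n. (\<integral>\<^sup>+ z. ennreal ((f n z)\<^sup>2) \<partial>M) \<le> ennreal B"
    and g_sq: "(\<integral>\<^sup>+ z. ennreal ((g z)\<^sup>2) \<partial>M) \<le> ennreal B" and "0 \<le> B"
  shows "(\<lambda>n. \<integral>z. f n z \<partial>M) \<longlonglongrightarrow> (\<integral>z. g z \<partial>M)"
proof -
  have f_int: "integrable M (\<lambda>z. (f n z)\<^sup>2)" "integrable M (f n)" "(\<integral>z. (f n z)\<^sup>2 \<partial>M) \<le> B" for n
    using integrable_nonneg_of_nn_integral_le[OF _ _ f_sq \<open>0 \<le> B\<close>] f_meas
      square_integrable_imp_integrable by auto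
  have g_int: "integrable M (\<lambda>z. (g z)\<^sup>2)" "integrable M g" "(\<integral>z. (g z)\<^sup>2 \<partial>M) \<le> B"
    using integrable_nonneg_of_nn_integral_le[OF _ _ g_sq \<open>0 \<le> B\<close>] g_meas
      square_integrable_imp_integrable by auto
  define e where "e n z = \<bar>f n z - g z\<bar>" for n z
  have e_meas: "e n \<in> borel_measurable M" for n
    unfolding e_def using f_meas g_meas by measurable
  have e_sq_le: "(e n z)\<^sup>2 \<le> 2 * (f n z)\<^sup>2 + 2 * (g z)\<^sup>2" for n z
    using zero_le_power2[of "f n z + g z"]
    unfolding e_def power2_abs by (simp add: power2_eq_square algebra_simps)
  have e_sq_int: "integrable M (\<lambda>z. (e n z)\<^sup>2)" for n
  proof (rule Bochner_Integration.integrable_bound)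
    show "integrable M (\<lambda>z. 2 * (f n z)\<^sup>2 + 2 * (g z)\<^sup>2)"
      using f_int(1) g_int(1) by simp
    show "(\<lambda>z. (e n z)\<^sup>2) \<in> borel_measurable M"
      using e_meas by simp
    show "AE z in M. norm ((e n z)\<^sup>2) \<le> norm (2 * (f n z)\<^sup>2 + 2 * (g z)\<^sup>2)"
      using e_sq_le by simp
  qed
  have e_sq: "(\<integral>z. (e n z)\<^sup>2 \<partial>M) \<le> 4 * B" for n
  proof -
    have "(\<integral>z. (e n z)\<^sup>2 \<partial>M) \<le> (\<integral>z. 2 * (f n z)\<^sup>2 + 2 * (g z)\<^sup>2 \<partial>M)"
      using e_sq_int f_int(1) g_int(1) e_sq_le by (intro integral_mono) auto
    then show ?thesis
      using f_int(1,3)[of n] g_int(1,3) by simp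
  qed
  have e_int: "integrable M (e n)" for n
    unfolding e_def using f_int(2) g_int(2) by auto
  have min_lim: "(\<lambda>n. \<integral>z. min (e n z) K \<partial>M) \<longlonglongrightarrow> 0" if "0 < K" for K
  proof -
    have "(\<lambda>n. \<integral>z. min (e n z) K \<partial>M) \<longlonglongrightarrow> (\<integral>z. 0 \<partial>M)"
    proof (rule integral_dominated_convergence[where w="\<lambda>z. K"])
      show "AE z in M. (\<lambda>n. min (e n z) K) \<longlonglongrightarrow> 0"
      proof (rule AE_I2)
        fix z assume "z \<in> space M"
        then have "(\<lambda>n. e n z) \<longlonglongrightarrow> \<bar>g z - g z\<bar>"
          unfolding e_def by (intro tendsto_intros lim)
        then have "(\<lambda>n. min (e n z) K) \<longlonglongrightarrow> min 0 K"
          by (intro tendsto_intros) simp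
        then show "(\<lambda>n. min (e n z) K) \<longlonglongrightarrow> 0"
          using \<open>0 < K\<close> by simp
      qed
      show "(\<lambda>z. min (e n z) K) \<in> borel_measurable M" for n
        using e_meas by measurable
    qed (use \<open>0 < K\<close> in \<open>auto simp: e_def\<close>)
    then show ?thesis
      by simp
  qed
  show ?thesis
  proof (rule LIMSEQ_I)
    fix r :: real assume "0 < r"
    define K where "K = 8 * B / r + 1"
    have "0 < K"
      using \<open>0 < r\<close> \<open>0 \<le> B\<close> by (simp add: K_def add_nonneg_pos)
    have "4 * B * 2 < r * K"
      using \<open>0 < r\<close> \<open>0 \<le> B\<close> by (simp add: K_def field_simps)
    then have "4 * B / K < r / 2"
      using \<open>0 < K\<close> by (simp add: field_simps)
    obtain N where N: "\<And>n. N \<le> n \<Longrightarrow> norm ((\<integral>z. min (e n z) K \<partial>M) - 0) < r / 2"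
      using LIMSEQ_D[OF min_lim[OF \<open>0 < K\<close>], of "r / 2"] \<open>0 < r\<close> by auto
    have "norm ((\<integral>z. f n z \<partial>M) - (\<integral>z. g z \<partial>M)) < r" if "N \<le> n" for n
    proof -
      have "norm ((\<integral>z. f n z \<partial>M) - (\<integral>z. g z \<partial>M)) = norm (\<integral>z. f n z - g z \<partial>M)"
        using f_int(2) g_int(2) by simp
      also have "\<dots> \<le> (\<integral>z. e n z \<partial>M)"
        unfolding e_def using integral_norm_bound by simp
      also have "\<dots> \<le> (\<integral>z. min (e n z) K \<partial>M) + (\<integral>z. (e n z)\<^sup>2 \<partial>M) / K"
        by (rule integral_le_integral_min_plus_sq[OF e_int e_sq_int _ \<open>0 < K\<close>]) (simp add: e_def)
      also have "\<dots> \<le> (\<integral>z. min (e n z) K \<partial>M) + 4 * B / K"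
        using e_sq[of n] \<open>0 < K\<close> by (simp add: divide_right_mono)
      also have "\<dots> < r"
        using N[OF that] \<open>4 * B / K < r / 2\<close> by simp
      finally show ?thesis .
    qed
    then show "\<exists>N. \<forall>n\<ge>N. norm ((\<integral>z. f n z \<partial>M) - (\<integral>z. g z \<partial>M)) < r"
      by blast
  qed
qed

lemma nn_integral_density_le_of_l1_dist_tendsto:
  fixes g :: "'z \<Rightarrow> real"
  assumes g_meas: "g \<in> borel_measurable MZ" and g_nonneg: "\<And>z. 0 \<le> g z"
    and dens: "\<And>s. is_density MZ (p s)" and dens_q: "is_density MZ q"
    and bound: "\<And>s. (\<integral>\<^sup>+ z. ennreal (g z * p s z) \<partial>MZ) \<le> ennreal G" and "0 \<le> G"
    and lim: "(\<lambda>s. l1_dist MZ (p s) q) \<longlonglongrightarrow> 0"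
  shows "(\<integral>\<^sup>+ z. ennreal (g z * q z) \<partial>MZ) \<le> ennreal G"
proof -
  define T where "T n z = min (g z) (real n)" for n z
  note qD = is_densityD[OF dens_q]
  have T_bound: "(\<integral>\<^sup>+ z. ennreal (T n z) * ennreal (q z) \<partial>MZ) \<le> ennreal G" for n
  proof -
    have "(\<integral>\<^sup>+ z. ennreal (T n z) * ennreal (q z) \<partial>MZ) \<le> ennreal (G + real n * l1_dist MZ (p s) q)" for s
    proof -
      note pD = is_densityD[OF dens[of s]]
      have "(\<integral>\<^sup>+ z. ennreal (T n z) * ennreal (q z) \<partial>MZ)
          \<le> (\<integral>\<^sup>+ z. ennreal (g z * p s z) + ennreal (real n) * ennreal \<bar>p s z - q z\<bar> \<partial>MZ)"
      proof (rule nn_integral_mono)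
        fix z assume z: "z \<in> space MZ"
        have T: "0 \<le> T n z" "T n z \<le> g z" "T n z \<le> real n"
          using g_nonneg[of z] by (auto simp: T_def)
        have "T n z * q z = T n z * p s z + T n z * (q z - p s z)"
          by (simp add: algebra_simps)
        also have "T n z * p s z \<le> g z * p s z"
          using T pD(2)[OF z] by (simp add: mult_right_mono)
        also have "T n z * (q z - p s z) \<le> real n * \<bar>p s z - q z\<bar>"
          using T by (smt (verit) mult_left_mono mult_right_mono abs_ge_zero abs_minus_commute abs_ge_self)
        finally show "ennreal (T n z) * ennreal (q z) \<le> ennreal (g z * p s z) + ennreal (real n) * ennreal \<bar>p s z - q z\<bar>"
          using T g_nonneg[of z] qD(2)[OF z] pD(2)[OF z]
          by (simp add: ennreal_mult[symmetric] ennreal_plus[symmetric] del: ennreal_plus)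
      qed
      also have "\<dots> = (\<integral>\<^sup>+ z. ennreal (g z * p s z) \<partial>MZ) + ennreal (real n) * (\<integral>\<^sup>+ z. ennreal \<bar>p s z - q z\<bar> \<partial>MZ)"
        using g_meas pD(1) qD(1) by (simp add: nn_integral_add nn_integral_cmult)
      also have "\<dots> \<le> ennreal G + ennreal (real n) * ennreal (l1_dist MZ (p s) q)"
        using bound[of s] nn_integral_abs_diff_eq_l1_dist[OF dens dens_q] by (intro add_mono) auto
      also have "\<dots> = ennreal (G + real n * l1_dist MZ (p s) q)"
        using \<open>0 \<le> G\<close> by (simp add: ennreal_mult[symmetric] ennreal_plus[symmetric] l1_dist_def del: ennreal_plus)
      finally show ?thesis .
    qed
    moreover have "(\<lambda>s. ennreal (G + real n * l1_dist MZ (p s) q)) \<longlonglongrightarrow> ennreal (G + real n * 0)"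
      by (intro tendsto_intros lim)
    ultimately show ?thesis
      by (intro LIMSEQ_le_const[where X="\<lambda>s. ennreal (G + real n * l1_dist MZ (p s) q)"]) auto
  qed
  have "(\<lambda>n. \<integral>\<^sup>+ z. ennreal (T n z) * ennreal (q z) \<partial>MZ) \<longlonglongrightarrow> (\<integral>\<^sup>+ z. ennreal (g z) * ennreal (q z) \<partial>MZ)"
  proof (rule nn_integral_LIMSEQ)
    show "incseq (\<lambda>n z. ennreal (T n z) * ennreal (q z))"
      by (auto simp: incseq_def le_fun_def T_def intro!: mult_right_mono ennreal_leI)
    show "(\<lambda>z. ennreal (T n z) * ennreal (q z)) \<in> borel_measurable MZ" for n
      unfolding T_def using g_meas qD(1) by measurable
    show "(\<lambda>n. ennreal (T n z) * ennreal (q z)) \<longlonglongrightarrow> ennreal (g z) * ennreal (q z)" for z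
    proof (rule tendsto_eventually)
      obtain N where "g z \<le> real N"
        using real_arch_simple by blast
      have "\<forall>\<^sub>F n in sequentially. T n z = g z"
        unfolding eventually_sequentially T_def
        by (intro exI[of _ N] allI impI min.absorb1)
          (use \<open>g z \<le> real N\<close> in \<open>meson of_nat_le_iff order_trans\<close>)
      then show "\<forall>\<^sub>F n in sequentially. ennreal (T n z) * ennreal (q z) = ennreal (g z) * ennreal (q z)"
        by eventually_elim simp
    qed
  qed
  then have "(\<integral>\<^sup>+ z. ennreal (g z) * ennreal (q z) \<partial>MZ) \<le> ennreal G"
    by (rule LIMSEQ_le_const2) (use T_bound in blast)
  moreover have "(\<integral>\<^sup>+ z. ennreal (g z * q z) \<partial>MZ) = (\<integral>\<^sup>+ z. ennreal (g z) * ennreal (q z) \<partial>MZ)"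
    by (intro nn_integral_cong) (simp add: ennreal_mult' g_nonneg)
  ultimately show ?thesis
    by simp
qed

section \<open>Differentiation under the integral sign\<close>

lemma nn_integral_sq_difference_quotient_le:
  fixes f :: "'z \<Rightarrow> 'a::euclidean_space \<Rightarrow> real"
  assumes Q: "sigma_finite_measure Q"
    and meas: "\<And>\<theta>. (\<lambda>z. f z \<theta>) \<in> borel_measurable Q"
    and deriv: "\<And>z \<theta>. (f z has_derivative (\<lambda>h. gf z \<theta> \<bullet> h)) (at \<theta>)"
    and grad_sq: "\<And>\<theta>. (\<integral>\<^sup>+ z. ennreal ((gf z \<theta> \<bullet> v)\<^sup>2) \<partial>Q) \<le> ennreal C"
    and "0 < h"
  shows "(\<integral>\<^sup>+ z. ennreal (((f z (\<theta> + h *\<^sub>R v) - f z \<theta>) / h)\<^sup>2) \<partial>Q) \<le> ennreal C"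
proof -
  interpret Q: sigma_finite_measure Q
    by (rule Q)
  interpret pair_sigma_finite Q lborel
    by unfold_locales
  have gf_joint: "(\<lambda>x. gf (fst x) (snd x)) \<in> borel_measurable (Q \<Otimes>\<^sub>M borel)"
    by (rule borel_measurable_gradient[OF meas deriv])
  have [measurable]: "(\<lambda>z. gf z \<theta>') \<in> borel_measurable Q" for \<theta>'
    by (rule borel_measurable_gradient_at[OF meas deriv])
  define F where "F x = ennreal ((gf (fst x) (\<theta> + snd x *\<^sub>R v) \<bullet> v)\<^sup>2 * indicator {0..h} (snd x))" for x
  have "(\<lambda>x. (fst x, \<theta> + snd x *\<^sub>R v)) \<in> measurable (Q \<Otimes>\<^sub>M lborel) (Q \<Otimes>\<^sub>M borel)"
    by measurable
  from measurable_compose[OF this gf_joint]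
  have [measurable]: "(\<lambda>x. gf (fst x) (\<theta> + snd x *\<^sub>R v)) \<in> borel_measurable (Q \<Otimes>\<^sub>M lborel)"
    by simp
  have F_meas: "F \<in> borel_measurable (Q \<Otimes>\<^sub>M lborel)"
    unfolding F_def by measurable
  have "ennreal (((f z (\<theta> + h *\<^sub>R v) - f z \<theta>) / h)\<^sup>2) \<le> ennreal (1 / h) * (\<integral>\<^sup>+ s. F (z, s) \<partial>lborel)"
    if "z \<in> space Q" for z
  proof -
    have "(\<lambda>s. (z, \<theta> + s *\<^sub>R v)) \<in> measurable borel (Q \<Otimes>\<^sub>M borel)"
      using that by measurable
    from measurable_compose[OF this gf_joint]
    have "(\<lambda>s. gf z (\<theta> + s *\<^sub>R v) \<bullet> v) \<in> borel_measurable borel"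
      by (intro borel_measurable_inner) simp_all
    from sq_increment_le_integral_sq_derivative[OF deriv this \<open>0 < h\<close>]
    have "ennreal ((f z (\<theta> + h *\<^sub>R v) - f z \<theta>)\<^sup>2) * ennreal (1 / h\<^sup>2)
        \<le> (ennreal h * (\<integral>\<^sup>+ s. F (z, s) \<partial>lborel)) * ennreal (1 / h\<^sup>2)"
      by (intro mult_right_mono) (simp_all add: F_def)
    also have "\<dots> = (ennreal h * ennreal (1 / h\<^sup>2)) * (\<integral>\<^sup>+ s. F (z, s) \<partial>lborel)"
      by (simp only: mult_ac)
    also have "ennreal h * ennreal (1 / h\<^sup>2) = ennreal (1 / h)"
      using \<open>0 < h\<close> by (simp add: ennreal_mult[symmetric] power2_eq_square)
    finally show ?thesis
      by (simp add: ennreal_mult[symmetric] power_divide)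
  qed
  then have "(\<integral>\<^sup>+ z. ennreal (((f z (\<theta> + h *\<^sub>R v) - f z \<theta>) / h)\<^sup>2) \<partial>Q)
      \<le> (\<integral>\<^sup>+ z. ennreal (1 / h) * (\<integral>\<^sup>+ s. F (z, s) \<partial>lborel) \<partial>Q)"
    by (rule nn_integral_mono)
  also have "\<dots> = ennreal (1 / h) * (\<integral>\<^sup>+ s. (\<integral>\<^sup>+ z. F (z, s) \<partial>Q) \<partial>lborel)"
    using F_meas by (simp add: nn_integral_cmult Fubini'[of "\<lambda>z s. F (z, s)"])
  also have "(\<integral>\<^sup>+ s. (\<integral>\<^sup>+ z. F (z, s) \<partial>Q) \<partial>lborel) \<le> (\<integral>\<^sup>+ s. ennreal C * indicator {0..h} s \<partial>lborel)"
  proof (rule nn_integral_mono)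
    fix s
    have "(\<integral>\<^sup>+ z. F (z, s) \<partial>Q) = (\<integral>\<^sup>+ z. ennreal ((gf z (\<theta> + s *\<^sub>R v) \<bullet> v)\<^sup>2) * indicator {0..h} s \<partial>Q)"
      by (simp add: F_def ennreal_mult'' ennreal_indicator)
    also have "\<dots> = (\<integral>\<^sup>+ z. ennreal ((gf z (\<theta> + s *\<^sub>R v) \<bullet> v)\<^sup>2) \<partial>Q) * indicator {0..h} s"
      by (rule nn_integral_multc) measurable
    also have "\<dots> \<le> ennreal C * indicator {0..h} s"
      by (rule mult_right_mono[OF grad_sq]) simp
    finally show "(\<integral>\<^sup>+ z. F (z, s) \<partial>Q) \<le> ennreal C * indicator {0..h} s" .
  qed
  also have "(\<integral>\<^sup>+ s. ennreal C * indicator {0..h} s \<partial>lborel) = ennreal C * ennreal h"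
    using \<open>0 < h\<close> by (simp add: nn_integral_cmult_indicator)
  also have "ennreal (1 / h) * (ennreal C * ennreal h) = ennreal C * (ennreal h * ennreal (1 / h))"
    by (simp only: mult_ac)
  also have "ennreal h * ennreal (1 / h) = 1"
    using \<open>0 < h\<close> by (simp add: ennreal_mult[symmetric])
  finally show ?thesis
    by (simp add: mult_left_mono)
qed

lemma inner_gradient_integral:
  fixes f :: "'z \<Rightarrow> 'a::euclidean_space \<Rightarrow> real"
  assumes Q: "finite_measure Q"
    and meas: "\<And>\<theta>. (\<lambda>z. f z \<theta>) \<in> borel_measurable Q"
    and deriv: "\<And>z \<theta>. (f z has_derivative (\<lambda>h. gf z \<theta> \<bullet> h)) (at \<theta>)"
    and int: "\<And>\<theta>. integrable Q (\<lambda>z. f z \<theta>)"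
    and grad_sq: "\<And>\<theta>. (\<integral>\<^sup>+ z. ennreal ((gf z \<theta> \<bullet> v)\<^sup>2) \<partial>Q) \<le> ennreal C" and "0 \<le> C"
    and F_deriv: "((\<lambda>\<theta>. \<integral>z. f z \<theta> \<partial>Q) has_derivative (\<lambda>h. gF \<bullet> h)) (at \<theta>)"
  shows "gF \<bullet> v = (\<integral>z. gf z \<theta> \<bullet> v \<partial>Q)"
proof -
  interpret finite_measure Q
    by (rule Q)
  define hn where "hn n = 1 / real (Suc n)" for n
  have [measurable]: "(\<lambda>z. gf z \<theta>) \<in> borel_measurable Q"
    by (rule borel_measurable_gradient_at[OF meas deriv])
  have "(\<lambda>n. \<integral>z. (f z (\<theta> + hn n *\<^sub>R v) - f z \<theta>) / hn n \<partial>Q) \<longlonglongrightarrow> (\<integral>z. gf z \<theta> \<bullet> v \<partial>Q)"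
  proof (rule LIMSEQ_integral_of_sq_bounded)
    show "(\<lambda>z. (f z (\<theta> + hn n *\<^sub>R v) - f z \<theta>) / hn n) \<in> borel_measurable Q" for n
      using meas by measurable
    show "(\<lambda>n. (f z (\<theta> + hn n *\<^sub>R v) - f z \<theta>) / hn n) \<longlonglongrightarrow> gf z \<theta> \<bullet> v" for z
      unfolding hn_def by (rule has_derivative_directional_LIMSEQ[OF deriv])
    show "(\<integral>\<^sup>+ z. ennreal (((f z (\<theta> + hn n *\<^sub>R v) - f z \<theta>) / hn n)\<^sup>2) \<partial>Q) \<le> ennreal C" for n
      by (rule nn_integral_sq_difference_quotient_le[OF _ meas deriv grad_sq])
        (simp_all add: hn_def sigma_finite_measure_axioms)
    show "(\<lambda>z. gf z \<theta> \<bullet> v) \<in> borel_measurable Q"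
      by measurable
  qed (fact grad_sq \<open>0 \<le> C\<close>)+
  moreover have "(\<lambda>n. \<integral>z. (f z (\<theta> + hn n *\<^sub>R v) - f z \<theta>) / hn n \<partial>Q) \<longlonglongrightarrow> gF \<bullet> v"
    using has_derivative_directional_LIMSEQ[OF F_deriv, of v] int by (simp add: hn_def)
  ultimately show ?thesis
    using LIMSEQ_unique by blast
qed

lemma risk_gradient_inner_eq:
  fixes l :: "'z \<Rightarrow> 'a::euclidean_space \<Rightarrow> real"
  assumes l_meas: "\<And>\<theta>. (\<lambda>z. l z \<theta>) \<in> borel_measurable MZ"
    and l_grad: "\<And>z \<theta>. (l z has_derivative (\<lambda>h. gl z \<theta> \<bullet> h)) (at \<theta>)"
    and dens: "is_density MZ q" and l_int: "\<And>\<theta>. integrable MZ (\<lambda>z. l z \<theta> * q z)"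
    and grad_sq: "\<And>\<theta>. (\<integral>\<^sup>+ z. ennreal ((norm (gl z \<theta>))\<^sup>2 * q z) \<partial>MZ) \<le> ennreal G" and "0 \<le> G"
    and risk_deriv: "(risk l MZ q has_derivative (\<lambda>h. gL \<bullet> h)) (at \<theta>)"
  shows "gL \<bullet> v = (\<integral>z. (gl z \<theta> \<bullet> v) * q z \<partial>MZ)"
proof -
  define Q where "Q = density MZ (\<lambda>z. ennreal (q z))"
  note qD = is_densityD[OF dens]
  have [measurable]: "q \<in> borel_measurable MZ"
    by (rule qD(1))
  have q_AE: "AE z in MZ. 0 \<le> q z"
    using qD(2) by (rule AE_I2)
  have integral_Q: "(\<integral>z. \<phi> z \<partial>Q) = (\<integral>z. \<phi> z * q z \<partial>MZ)" if "\<phi> \<in> borel_measurable MZ" for \<phi>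
    unfolding Q_def using that qD(1) q_AE by (simp add: integral_density mult.commute)
  have gl_meas [measurable]: "(\<lambda>z. gl z \<theta>') \<in> borel_measurable MZ" for \<theta>'
    by (rule borel_measurable_gradient_at[OF l_meas l_grad])
  have "gL \<bullet> v = (\<integral>z. gl z \<theta> \<bullet> v \<partial>Q)"
  proof (rule inner_gradient_integral)
    show "finite_measure Q"
      using prob_space_density_is_density[OF dens] unfolding Q_def prob_space_def by blast
    show "(\<lambda>z. l z \<theta>') \<in> borel_measurable Q" for \<theta>'
      using l_meas by (simp add: Q_def)
    show "integrable Q (\<lambda>z. l z \<theta>')" for \<theta>'
      unfolding Q_def using l_int[of \<theta>'] l_meas qD(1) q_AE by (simp add: integrable_density mult.commute)
    have "risk l MZ q = (\<lambda>\<theta>. \<integral>z. l z \<theta> \<partial>Q)"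
      using l_meas by (simp add: fun_eq_iff risk_def integral_Q)
    then show "((\<lambda>\<theta>. \<integral>z. l z \<theta> \<partial>Q) has_derivative (\<lambda>h. gL \<bullet> h)) (at \<theta>)"
      using risk_deriv by simp
    show "(\<integral>\<^sup>+ z. ennreal ((gl z \<theta>' \<bullet> v)\<^sup>2) \<partial>Q) \<le> ennreal (G * (norm v)\<^sup>2)" for \<theta>'
    proof -
      have "(\<integral>\<^sup>+ z. ennreal ((gl z \<theta>' \<bullet> v)\<^sup>2) \<partial>Q) = (\<integral>\<^sup>+ z. ennreal (q z) * ennreal ((gl z \<theta>' \<bullet> v)\<^sup>2) \<partial>MZ)"
        unfolding Q_def by (intro nn_integral_density) measurable
      also have "\<dots> \<le> (\<integral>\<^sup>+ z. ennreal ((norm (gl z \<theta>'))\<^sup>2 * q z) * ennreal ((norm v)\<^sup>2) \<partial>MZ)"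
      proof (rule nn_integral_mono)
        fix z assume "z \<in> space MZ"
        have "(gl z \<theta>' \<bullet> v)\<^sup>2 \<le> (norm (gl z \<theta>') * norm v)\<^sup>2"
          using Cauchy_Schwarz_ineq2 by (metis abs_ge_zero power2_abs power_mono)
        from mult_left_mono[OF this qD(2)[OF \<open>z \<in> space MZ\<close>]]
        have "q z * (gl z \<theta>' \<bullet> v)\<^sup>2 \<le> (norm (gl z \<theta>'))\<^sup>2 * q z * (norm v)\<^sup>2"
          by (simp add: power_mult_distrib mult_ac)
        then show "ennreal (q z) * ennreal ((gl z \<theta>' \<bullet> v)\<^sup>2) \<le> ennreal ((norm (gl z \<theta>'))\<^sup>2 * q z) * ennreal ((norm v)\<^sup>2)"
          using qD(2)[OF \<open>z \<in> space MZ\<close>] by (simp add: ennreal_mult[symmetric])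
      qed
      also have "\<dots> = (\<integral>\<^sup>+ z. ennreal ((norm (gl z \<theta>'))\<^sup>2 * q z) \<partial>MZ) * ennreal ((norm v)\<^sup>2)"
        by (intro nn_integral_multc) measurable
      also have "\<dots> \<le> ennreal G * ennreal ((norm v)\<^sup>2)"
        by (rule mult_right_mono[OF grad_sq]) simp
      also have "\<dots> = ennreal (G * (norm v)\<^sup>2)"
        using \<open>0 \<le> G\<close> by (simp add: ennreal_mult)
      finally show ?thesis .
    qed
    show "(l z has_derivative (\<lambda>h. gl z \<theta>' \<bullet> h)) (at \<theta>')" for z \<theta>'
      by (rule l_grad)
    show "0 \<le> G * (norm v)\<^sup>2"
      using \<open>0 \<le> G\<close> by simp
  qed
  also have "\<dots> = (\<integral>z. (gl z \<theta> \<bullet> v) * q z \<partial>MZ)"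
    by (rule integral_Q) measurable
  finally show ?thesis .
qed

section \<open>One step of the iteration\<close>

text \<open>Since \<open>u\<close> is the \<open>q\<close>-mean of \<open>g\<close>, \<open>\<integral> (u \<bullet> g) q = \<parallel>u\<parallel>\<^sup>2\<close>, whence also \<open>\<parallel>u\<parallel> \<le> \<surd>G\<close>.
  Replacing \<open>q\<close> by \<open>p\<close> costs at most \<open>\<parallel>u\<parallel> \<integral> \<parallel>g\<parallel> \<bar>p - q\<bar> \<le> \<surd>G \<cdot> \<surd>(2 G c)\<close>, where
  \<open>c = l1_dist MZ p q\<close>, by Cauchy--Schwarz with weight \<open>\<bar>p - q\<bar>\<close>.\<close>
lemma inner_mean_lower_bound:
  fixes g :: "'z \<Rightarrow> 'a::euclidean_space"
  assumes dens_p: "is_density MZ p" and dens_q: "is_density MZ q"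
    and g_meas: "g \<in> borel_measurable MZ"
    and sq_p: "(\<integral>\<^sup>+ z. ennreal ((norm (g z))\<^sup>2 * p z) \<partial>MZ) \<le> ennreal G"
    and sq_q: "(\<integral>\<^sup>+ z. ennreal ((norm (g z))\<^sup>2 * q z) \<partial>MZ) \<le> ennreal G" and "0 \<le> G"
    and mean: "\<And>v. u \<bullet> v = (\<integral>z. (g z \<bullet> v) * q z \<partial>MZ)"
  shows "(norm u)\<^sup>2 - sqrt 2 * G * sqrt (l1_dist MZ p q) \<le> (\<integral>z. (u \<bullet> g z) * p z \<partial>MZ)"
proof -
  note pD = is_densityD[OF dens_p] and qD = is_densityD[OF dens_q]
  note mp = density_second_moment[OF dens_p g_meas sq_p \<open>0 \<le> G\<close>]
  note mq = density_second_moment[OF dens_q g_meas sq_q \<open>0 \<le> G\<close>]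
  define c where "c = l1_dist MZ p q"
  have [measurable]: "p \<in> borel_measurable MZ" "q \<in> borel_measurable MZ"
    using pD(1) qD(1) .
  have mean_u: "(\<integral>z. (u \<bullet> g z) * q z \<partial>MZ) = (norm u)\<^sup>2"
    using mean[of u] by (simp add: power2_norm_eq_inner inner_commute)
  have "norm u \<le> sqrt G"
  proof -
    have "(norm u)\<^sup>2 \<le> (\<integral>z. norm u * (norm (g z) * q z) \<partial>MZ)"
      unfolding mean_u[symmetric]
    proof (rule integral_mono[OF mq(5)])
      show "integrable MZ (\<lambda>z. norm u * (norm (g z) * q z))"
        using mq(3) by simp
      fix z assume "z \<in> space MZ"
      have "(u \<bullet> g z) * q z \<le> (norm u * norm (g z)) * q z"
        using qD(2)[OF \<open>z \<in> space MZ\<close>] norm_cauchy_schwarz by (rule mult_right_mono[rotated])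
      then show "(u \<bullet> g z) * q z \<le> norm u * (norm (g z) * q z)"
        by (simp add: mult_ac)
    qed
    also have "\<dots> \<le> norm u * sqrt G"
      using mq(4) by (simp add: mult_left_mono)
    finally have "(norm u)\<^sup>2 \<le> norm u * sqrt G" .
    then show ?thesis
      using \<open>0 \<le> G\<close> by (cases "norm u = 0") (auto simp: power2_eq_square)
  qed
  have d_int: "integrable MZ (\<lambda>z. \<bar>p z - q z\<bar>)"
    using pD(3) qD(3) by simp
  have sq_d_le: "(norm (g z))\<^sup>2 * \<bar>p z - q z\<bar> \<le> (norm (g z))\<^sup>2 * p z + (norm (g z))\<^sup>2 * q z"
    if "z \<in> space MZ" for z
  proof -
    have "\<bar>p z - q z\<bar> \<le> p z + q z"
      using pD(2)[OF that] qD(2)[OF that] by simp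
    from mult_left_mono[OF this zero_le_power2[of "norm (g z)"]] show ?thesis
      by (simp add: distrib_left)
  qed
  have sq_d_int: "integrable MZ (\<lambda>z. (norm (g z))\<^sup>2 * \<bar>p z - q z\<bar>)"
  proof (rule Bochner_Integration.integrable_bound)
    show "integrable MZ (\<lambda>z. (norm (g z))\<^sup>2 * p z + (norm (g z))\<^sup>2 * q z)"
      using mp(1) mq(1) by simp
    show "AE z in MZ. norm ((norm (g z))\<^sup>2 * \<bar>p z - q z\<bar>) \<le> norm ((norm (g z))\<^sup>2 * p z + (norm (g z))\<^sup>2 * q z)"
      using sq_d_le by (intro AE_I2) (simp add: order_trans[OF _ abs_ge_self])
  qed (use g_meas in measurable)
  have "(\<integral>z. (norm (g z))\<^sup>2 * \<bar>p z - q z\<bar> \<partial>MZ) \<le> (\<integral>z. (norm (g z))\<^sup>2 * p z + (norm (g z))\<^sup>2 * q z \<partial>MZ)"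
    using sq_d_int mp(1) mq(1) sq_d_le by (intro integral_mono) auto
  also have "\<dots> \<le> 2 * G"
    using mp(1,2) mq(1,2) by simp
  finally have sq_d: "(\<integral>z. (norm (g z))\<^sup>2 * \<bar>p z - q z\<bar> \<partial>MZ) \<le> 2 * G" .
  have dev_int: "integrable MZ (\<lambda>z. norm (g z) * \<bar>p z - q z\<bar>)"
    using integral_abs_mult_le_sqrt(1)[of "\<lambda>z. norm (g z)" MZ "\<lambda>z. \<bar>p z - q z\<bar>"] g_meas d_int sq_d_int
    by simp
  have "(\<integral>z. norm (g z) * \<bar>p z - q z\<bar> \<partial>MZ) \<le> sqrt ((\<integral>z. (norm (g z))\<^sup>2 * \<bar>p z - q z\<bar> \<partial>MZ) * c)"
    using integral_abs_mult_le_sqrt(2)[of "\<lambda>z. norm (g z)" MZ "\<lambda>z. \<bar>p z - q z\<bar>"] g_meas d_int sq_d_int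
    by (simp add: c_def l1_dist_def)
  also have "\<dots> \<le> sqrt (2 * G * c)"
    using sq_d by (simp add: c_def l1_dist_def mult_right_mono)
  finally have dev: "(\<integral>z. norm (g z) * \<bar>p z - q z\<bar> \<partial>MZ) \<le> sqrt (2 * G * c)" .
  have diff_int: "integrable MZ (\<lambda>z. (u \<bullet> g z) * (p z - q z))"
    using mp(5) mq(5) by (simp add: right_diff_distrib)
  have "- (norm u * (norm (g z) * \<bar>p z - q z\<bar>)) \<le> (u \<bullet> g z) * (p z - q z)" for z
  proof -
    have "\<bar>(u \<bullet> g z) * (p z - q z)\<bar> \<le> norm u * (norm (g z) * \<bar>p z - q z\<bar>)"
      using mult_right_mono[OF Cauchy_Schwarz_ineq2[of u "g z"] abs_ge_zero[of "p z - q z"]]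
      by (simp add: abs_mult mult_ac)
    then show ?thesis
      using abs_ge_minus_self[of "(u \<bullet> g z) * (p z - q z)"] by linarith
  qed
  then have "(\<integral>z. - (norm u * (norm (g z) * \<bar>p z - q z\<bar>)) \<partial>MZ) \<le> (\<integral>z. (u \<bullet> g z) * (p z - q z) \<partial>MZ)"
    using dev_int diff_int by (intro integral_mono) auto
  then have "- (norm u * (\<integral>z. norm (g z) * \<bar>p z - q z\<bar> \<partial>MZ)) \<le> (\<integral>z. (u \<bullet> g z) * (p z - q z) \<partial>MZ)"
    by simp
  moreover have "(\<integral>z. (u \<bullet> g z) * (p z - q z) \<partial>MZ) = (\<integral>z. (u \<bullet> g z) * p z \<partial>MZ) - (norm u)\<^sup>2"
    using mp(5) mq(5) by (simp add: right_diff_distrib mean_u[symmetric])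
  moreover have "norm u * (\<integral>z. norm (g z) * \<bar>p z - q z\<bar> \<partial>MZ) \<le> sqrt G * sqrt (2 * G * c)"
    using \<open>norm u \<le> sqrt G\<close> dev by (rule mult_mono) (simp_all add: \<open>0 \<le> G\<close>)
  moreover have "sqrt G * sqrt (2 * G * c) = sqrt 2 * G * sqrt c"
  proof -
    have "sqrt G * sqrt (2 * G * c) = sqrt (G\<^sup>2 * (2 * c))"
      by (simp add: real_sqrt_mult[symmetric] power2_eq_square mult_ac)
    also have "\<dots> = sqrt 2 * G * sqrt c"
      using \<open>0 \<le> G\<close> by (simp add: real_sqrt_mult)
    finally show ?thesis .
  qed
  ultimately show ?thesis
    unfolding c_def by linarith
qed

lemma expected_descent_step:
  fixes R :: "'a::euclidean_space \<Rightarrow> real" and g :: "'z \<Rightarrow> 'a"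
  assumes R_nonneg: "\<And>\<theta>. 0 \<le> R \<theta>"
    and R_deriv: "\<And>\<theta>. (R has_derivative (\<lambda>h. gR \<theta> \<bullet> h)) (at \<theta>)" and lip: "L-lipschitz_on UNIV gR"
    and dens: "is_density MZ p" and g_meas: "g \<in> borel_measurable MZ"
    and sq: "(\<integral>\<^sup>+ z. ennreal ((norm (g z))\<^sup>2 * p z) \<partial>MZ) \<le> ennreal G" and "0 \<le> G"
    and inner: "(norm (gR \<theta>))\<^sup>2 - e \<le> (\<integral>z. (gR \<theta> \<bullet> g z) * p z \<partial>MZ)" and "0 \<le> e"
    and "0 < \<eta>"
  shows "(\<integral>\<^sup>+ z. ennreal (p z) * ennreal (R (\<theta> - \<eta> *\<^sub>R g z)) \<partial>MZ) + ennreal \<eta> * ennreal ((norm (gR \<theta>))\<^sup>2)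
     \<le> ennreal (R \<theta>) + (ennreal (\<eta> * e) + ennreal (L * G / 2 * \<eta>\<^sup>2))"
proof -
  note pD = is_densityD[OF dens]
  note m = density_second_moment[OF dens g_meas sq \<open>0 \<le> G\<close>]
  define u where "u = gR \<theta>"
  define B where "B z = R \<theta> - \<eta> * (u \<bullet> g z) + L / 2 * \<eta>\<^sup>2 * (norm (g z))\<^sup>2" for z
  have "0 \<le> L"
    using lip by (simp add: lipschitz_on_def)
  have descent: "R (\<theta> - \<eta> *\<^sub>R g z) \<le> B z" for z
    using descent_lemma[OF R_deriv lip, of "\<theta> - \<eta> *\<^sub>R g z" \<theta>] \<open>0 < \<eta>\<close>
    by (simp add: B_def u_def inner_diff_right power_mult_distrib)
  have pB_eq: "(\<lambda>z. p z * B z) = (\<lambda>z. R \<theta> * p z - \<eta> * ((u \<bullet> g z) * p z) + L / 2 * \<eta>\<^sup>2 * ((norm (g z))\<^sup>2 * p z))"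
    by (simp add: B_def fun_eq_iff algebra_simps)
  have pB_int: "integrable MZ (\<lambda>z. p z * B z)"
    unfolding pB_eq using m(1,5) pD(3) by simp
  have pB_integral: "(\<integral>z. p z * B z \<partial>MZ)
      = R \<theta> - \<eta> * (\<integral>z. (u \<bullet> g z) * p z \<partial>MZ) + L / 2 * \<eta>\<^sup>2 * (\<integral>z. (norm (g z))\<^sup>2 * p z \<partial>MZ)"
    unfolding pB_eq using m(1,5) pD(3,4) by simp
  have "\<eta> * ((norm u)\<^sup>2 - (\<integral>z. (u \<bullet> g z) * p z \<partial>MZ)) \<le> \<eta> * e"
    using inner \<open>0 < \<eta>\<close> unfolding u_def by (intro mult_left_mono) simp_all
  moreover have "L / 2 * \<eta>\<^sup>2 * (\<integral>z. (norm (g z))\<^sup>2 * p z \<partial>MZ) \<le> L / 2 * \<eta>\<^sup>2 * G"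
    using m(2) \<open>0 \<le> L\<close> by (intro mult_left_mono) simp_all
  moreover have "L / 2 * \<eta>\<^sup>2 * G = L * G / 2 * \<eta>\<^sup>2"
    by (simp add: field_simps)
  ultimately have key: "(\<integral>z. p z * B z \<partial>MZ) + \<eta> * (norm u)\<^sup>2 \<le> R \<theta> + \<eta> * e + L * G / 2 * \<eta>\<^sup>2"
    unfolding pB_integral right_diff_distrib by linarith
  have B_nonneg: "0 \<le> B z" for z
    using descent[of z] R_nonneg[of "\<theta> - \<eta> *\<^sub>R g z"] by linarith
  have "(\<integral>\<^sup>+ z. ennreal (p z) * ennreal (R (\<theta> - \<eta> *\<^sub>R g z)) \<partial>MZ) \<le> (\<integral>\<^sup>+ z. ennreal (p z * B z) \<partial>MZ)"
    using pD(2) descent by (intro nn_integral_mono) (simp add: ennreal_mult'[symmetric] ennreal_leI mult_left_mono)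
  also have "\<dots> = ennreal (\<integral>z. p z * B z \<partial>MZ)"
    using pD(2) B_nonneg by (intro nn_integral_eq_integral[OF pB_int]) (auto intro!: AE_I2)
  finally have "(\<integral>\<^sup>+ z. ennreal (p z) * ennreal (R (\<theta> - \<eta> *\<^sub>R g z)) \<partial>MZ) + ennreal \<eta> * ennreal ((norm u)\<^sup>2)
      \<le> ennreal (\<integral>z. p z * B z \<partial>MZ) + ennreal \<eta> * ennreal ((norm u)\<^sup>2)"
    by (rule add_right_mono)
  also have "\<dots> = ennreal ((\<integral>z. p z * B z \<partial>MZ) + \<eta> * (norm u)\<^sup>2)"
    using \<open>0 < \<eta>\<close> integral_nonneg_AE[of "\<lambda>z. p z * B z" MZ] pD(2) B_nonneg
    by (subst ennreal_plus) (auto intro!: AE_I2 simp: ennreal_mult)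
  also have "\<dots> \<le> ennreal (R \<theta> + \<eta> * e + L * G / 2 * \<eta>\<^sup>2)"
    by (rule ennreal_leI[OF key])
  also have "\<dots> = ennreal (R \<theta>) + (ennreal (\<eta> * e) + ennreal (L * G / 2 * \<eta>\<^sup>2))"
    using R_nonneg[of \<theta>] \<open>0 < \<eta>\<close> \<open>0 \<le> G\<close> \<open>0 \<le> L\<close> \<open>0 \<le> e\<close>
    by (simp add: ennreal_plus[symmetric] add.assoc del: ennreal_plus)
  finally show ?thesis
    unfolding u_def .
qed

lemma risk_nonneg:
  assumes "\<And>z \<theta>. 0 \<le> l z \<theta>" and "is_density MZ q"
  shows "0 \<le> risk l MZ q \<theta>"
  unfolding risk_def using assms is_densityD(2)[OF assms(2)]
  by (intro integral_nonneg_AE AE_I2) simp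

lemma risk_after_step_bound:
  fixes l :: "'z \<Rightarrow> 'a::euclidean_space \<Rightarrow> real"
  assumes l_nonneg: "\<And>z \<theta>. 0 \<le> l z \<theta>"
    and l_meas: "\<And>\<theta>. (\<lambda>z. l z \<theta>) \<in> borel_measurable MZ"
    and l_grad: "\<And>z \<theta>. (l z has_derivative (\<lambda>h. gl z \<theta> \<bullet> h)) (at \<theta>)"
    and dens: "is_density MZ p" and dens_star: "is_density MZ pstar"
    and risk_finite: "\<And>\<theta>. integrable MZ (\<lambda>z. l z \<theta> * pstar z)"
    and risk_deriv: "\<And>\<theta>. (risk l MZ pstar has_derivative (\<lambda>h. gL \<theta> \<bullet> h)) (at \<theta>)"
    and lip: "L-lipschitz_on UNIV gL"
    and sq_p: "\<And>\<theta>. (\<integral>\<^sup>+ z. ennreal ((norm (gl z \<theta>))\<^sup>2 * p z) \<partial>MZ) \<le> ennreal G"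
    and sq_star: "\<And>\<theta>. (\<integral>\<^sup>+ z. ennreal ((norm (gl z \<theta>))\<^sup>2 * pstar z) \<partial>MZ) \<le> ennreal G"
    and "0 \<le> G" and "0 < \<eta>"
  shows "(\<integral>\<^sup>+ z. ennreal (p z) * ennreal (risk l MZ pstar (\<theta> - \<eta> *\<^sub>R gl z \<theta>)) \<partial>MZ)
      + ennreal \<eta> * ennreal ((norm (gL \<theta>))\<^sup>2)
    \<le> ennreal (risk l MZ pstar \<theta>)
      + (ennreal (\<eta> * (sqrt 2 * G * sqrt (l1_dist MZ p pstar))) + ennreal (L * G / 2 * \<eta>\<^sup>2))"
proof -
  have gl_meas: "(\<lambda>z. gl z \<theta>) \<in> borel_measurable MZ"
    by (rule borel_measurable_gradient_at[OF l_meas l_grad])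
  have "0 \<le> l1_dist MZ p pstar"
    unfolding l1_dist_def by simp
  then have e_nonneg: "0 \<le> sqrt 2 * G * sqrt (l1_dist MZ p pstar)"
    using \<open>0 \<le> G\<close> by simp
  have mean: "gL \<theta> \<bullet> v = (\<integral>z. (gl z \<theta> \<bullet> v) * pstar z \<partial>MZ)" for v
    by (rule risk_gradient_inner_eq[OF l_meas l_grad dens_star risk_finite sq_star \<open>0 \<le> G\<close> risk_deriv])
  have "(norm (gL \<theta>))\<^sup>2 - sqrt 2 * G * sqrt (l1_dist MZ p pstar) \<le> (\<integral>z. (gL \<theta> \<bullet> gl z \<theta>) * p z \<partial>MZ)"
    by (rule inner_mean_lower_bound[OF dens dens_star gl_meas sq_p sq_star \<open>0 \<le> G\<close> mean])
  from expected_descent_step[OF risk_nonneg[OF l_nonneg dens_star] risk_deriv lip dens gl_meas sq_p \<open>0 \<le> G\<close>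
      this e_nonneg \<open>0 < \<eta>\<close>]
  show ?thesis .
qed

section \<open>Conditioning on the past\<close>

lemma nn_integral_independent_pair:
  assumes "prob_space M" and X_meas: "X \<in> measurable M N" and Y_meas: "Y \<in> measurable M MZ"
    and "prob_space P" and sets_P: "sets P = sets MZ"
    and indep: "\<And>A B. A \<in> sets N \<Longrightarrow> B \<in> sets MZ \<Longrightarrow>
      emeasure M ((X -` A \<inter> space M) \<inter> (Y -` B \<inter> space M)) = emeasure M (X -` A \<inter> space M) * emeasure P B"
    and h_meas: "h \<in> borel_measurable (N \<Otimes>\<^sub>M MZ)"
  shows "(\<integral>\<^sup>+ \<omega>. h (X \<omega>, Y \<omega>) \<partial>M) = (\<integral>\<^sup>+ \<omega>. (\<integral>\<^sup>+ z. h (X \<omega>, z) \<partial>P) \<partial>M)"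
    and "(\<lambda>\<omega>. \<integral>\<^sup>+ z. h (X \<omega>, z) \<partial>P) \<in> borel_measurable M"
proof -
  interpret M: prob_space M by fact
  interpret P: prob_space P by fact
  define \<nu> where "\<nu> = distr M N X"
  interpret \<nu>: prob_space \<nu>
    unfolding \<nu>_def using X_meas by (rule M.prob_space_distr)
  have XY_meas: "(\<lambda>\<omega>. (X \<omega>, Y \<omega>)) \<in> measurable M (N \<Otimes>\<^sub>M MZ)"
    using X_meas Y_meas by measurable
  have sets_\<nu>P: "sets (\<nu> \<Otimes>\<^sub>M P) = sets (N \<Otimes>\<^sub>M MZ)"
    by (rule sets_pair_measure_cong) (simp_all add: \<nu>_def sets_P)
  have h_meas': "h \<in> borel_measurable (\<nu> \<Otimes>\<^sub>M P)"
    unfolding measurable_cong_sets[OF sets_\<nu>P refl] by (rule h_meas)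
  have h_int_meas: "(\<lambda>\<theta>. \<integral>\<^sup>+ z. h (\<theta>, z) \<partial>P) \<in> borel_measurable N"
    using P.borel_measurable_nn_integral[of "\<lambda>\<theta> z. h (\<theta>, z)" \<nu>] h_meas' by (simp add: \<nu>_def)
  show "(\<lambda>\<omega>. \<integral>\<^sup>+ z. h (X \<omega>, z) \<partial>P) \<in> borel_measurable M"
    using measurable_compose[OF X_meas h_int_meas] by simp
  have joint: "\<nu> \<Otimes>\<^sub>M P = distr M (N \<Otimes>\<^sub>M MZ) (\<lambda>\<omega>. (X \<omega>, Y \<omega>))"
  proof (rule pair_measure_eqI)
    show "sigma_finite_measure \<nu>" "sigma_finite_measure P"
      by unfold_locales
    show "sets (\<nu> \<Otimes>\<^sub>M P) = sets (distr M (N \<Otimes>\<^sub>M MZ) (\<lambda>\<omega>. (X \<omega>, Y \<omega>)))"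
      by (simp add: sets_\<nu>P)
    fix A B assume "A \<in> sets \<nu>" "B \<in> sets P"
    then have A: "A \<in> sets N" and B: "B \<in> sets MZ"
      by (simp_all add: \<nu>_def sets_P)
    have "emeasure (distr M (N \<Otimes>\<^sub>M MZ) (\<lambda>\<omega>. (X \<omega>, Y \<omega>))) (A \<times> B)
        = emeasure M ((\<lambda>\<omega>. (X \<omega>, Y \<omega>)) -` (A \<times> B) \<inter> space M)"
      using A B by (intro emeasure_distr[OF XY_meas]) auto
    also have "(\<lambda>\<omega>. (X \<omega>, Y \<omega>)) -` (A \<times> B) \<inter> space M = (X -` A \<inter> space M) \<inter> (Y -` B \<inter> space M)"
      by auto
    also have "emeasure M \<dots> = emeasure M (X -` A \<inter> space M) * emeasure P B"
      by (rule indep[OF A B])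
    also have "emeasure M (X -` A \<inter> space M) = emeasure \<nu> A"
      unfolding \<nu>_def using A by (rule emeasure_distr[symmetric, OF X_meas])
    finally show "emeasure \<nu> A * emeasure P B = emeasure (distr M (N \<Otimes>\<^sub>M MZ) (\<lambda>\<omega>. (X \<omega>, Y \<omega>))) (A \<times> B)"
      by simp
  qed
  have "(\<integral>\<^sup>+ \<omega>. h (X \<omega>, Y \<omega>) \<partial>M) = (\<integral>\<^sup>+ x. h x \<partial>(\<nu> \<Otimes>\<^sub>M P))"
    unfolding joint by (rule nn_integral_distr[OF XY_meas, symmetric]) (simp add: h_meas)
  also have "\<dots> = (\<integral>\<^sup>+ \<theta>. (\<integral>\<^sup>+ z. h (\<theta>, z) \<partial>P) \<partial>\<nu>)"
    by (rule P.nn_integral_fst[OF h_meas', symmetric])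
  also have "\<dots> = (\<integral>\<^sup>+ \<omega>. (\<integral>\<^sup>+ z. h (X \<omega>, z) \<partial>P) \<partial>M)"
    unfolding \<nu>_def by (rule nn_integral_distr[OF X_meas]) (use h_int_meas in simp)
  finally show "(\<integral>\<^sup>+ \<omega>. h (X \<omega>, Y \<omega>) \<partial>M) = (\<integral>\<^sup>+ \<omega>. (\<integral>\<^sup>+ z. h (X \<omega>, z) \<partial>P) \<partial>M)" .
qed

lemma measurable_iterate:
  fixes Theta :: "nat \<Rightarrow> 'w \<Rightarrow> 'a::topological_space"
  assumes "Theta 0 \<in> borel_measurable M" and Z_meas: "\<And>s. Z s \<in> measurable M MZ"
    and F_meas: "\<And>s. (\<lambda>x. F s (fst x) (snd x)) \<in> borel_measurable (MZ \<Otimes>\<^sub>M borel)"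
    and step: "\<And>s \<omega>. Theta (Suc s) \<omega> = F s (Z s \<omega>) (Theta s \<omega>)"
  shows "Theta t \<in> borel_measurable M"
proof (induction t)
  case (Suc s)
  have "Theta (Suc s) = (\<lambda>\<omega>. F s (Z s \<omega>) (Theta s \<omega>))"
    by (rule ext) (rule step)
  with measurable_compose[OF measurable_Pair[OF Z_meas Suc.IH] F_meas] show ?case
    by simp
qed (fact assms(1))

lemma iterate_past_events:
  fixes Theta :: "nat \<Rightarrow> 'w \<Rightarrow> 'a::topological_space"
  assumes Z_meas: "\<And>s. Z s \<in> measurable M MZ"
    and F_meas: "\<And>s. (\<lambda>x. F s (fst x) (snd x)) \<in> borel_measurable (MZ \<Otimes>\<^sub>M borel)"
    and step: "\<And>s \<omega>. Theta (Suc s) \<omega> = F s (Z s \<omega>) (Theta s \<omega>)"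
    and "C \<in> sets borel"
  shows "Theta t -` C \<inter> space M \<in> past_events M (Theta 0) MZ Z t"
proof -
  define gen where "gen = {Theta 0 -` A \<inter> space M | A. A \<in> sets (borel :: 'a measure)}
      \<union> (\<Union>i<t. {Z i -` B \<inter> space M | B. B \<in> sets MZ})"
  define Mt where "Mt = sigma (space M) gen"
  have "gen \<subseteq> Pow (space M)"
    unfolding gen_def by auto
  then have sets_Mt: "sets Mt = past_events M (Theta 0) MZ Z t" and space_Mt: "space Mt = space M"
    unfolding Mt_def past_events_def gen_def[symmetric] by (simp_all add: sets_measure_of)
  have gen_sets: "X \<in> gen \<Longrightarrow> X \<in> sets Mt" for X
    unfolding sets_Mt past_events_def gen_def[symmetric] by (rule sigma_sets.Basic)
  have "Theta s \<in> borel_measurable Mt" if "s \<le> t" for s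
    using that
  proof (induction s)
    case 0
    show ?case
    proof (rule measurableI)
      fix A :: "'a set" assume "A \<in> sets borel"
      then have "Theta 0 -` A \<inter> space M \<in> gen"
        unfolding gen_def by (intro UnI1) blast
      then show "Theta 0 -` A \<inter> space Mt \<in> sets Mt"
        by (simp add: gen_sets space_Mt)
    qed simp
  next
    case (Suc s)
    have Z_Mt: "Z s \<in> measurable Mt MZ"
    proof (rule measurableI)
      fix B assume "B \<in> sets MZ"
      moreover have "s \<in> {..<t}"
        using Suc.prems by simp
      ultimately have "Z s -` B \<inter> space M \<in> gen"
        unfolding gen_def by (intro UnI2 UN_I[of s]) blast+
      then show "Z s -` B \<inter> space Mt \<in> sets Mt"
        by (simp add: gen_sets space_Mt)
    qed (use measurable_space[OF Z_meas] in \<open>simp add: space_Mt\<close>)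
    have "Theta s \<in> borel_measurable Mt"
      using Suc by simp
    from measurable_compose[OF measurable_Pair[OF Z_Mt this] F_meas]
    have "(\<lambda>\<omega>. F s (Z s \<omega>) (Theta s \<omega>)) \<in> borel_measurable Mt"
      by simp
    moreover have "Theta (Suc s) = (\<lambda>\<omega>. F s (Z s \<omega>) (Theta s \<omega>))"
      by (rule ext) (rule step)
    ultimately show ?case
      by simp
  qed
  from measurable_sets[OF this[OF order_refl] \<open>C \<in> sets borel\<close>] show ?thesis
    unfolding space_Mt sets_Mt .
qed

lemma nn_integral_iterate_step:
  fixes Theta :: "nat \<Rightarrow> 'w \<Rightarrow> 'a::topological_space" and f :: "'a \<Rightarrow> ennreal"
  assumes "prob_space M" and "Theta 0 \<in> borel_measurable M" and Z_meas: "\<And>s. Z s \<in> measurable M MZ"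
    and F_meas: "\<And>s. (\<lambda>x. F s (fst x) (snd x)) \<in> borel_measurable (MZ \<Otimes>\<^sub>M borel)"
    and step: "\<And>s \<omega>. Theta (Suc s) \<omega> = F s (Z s \<omega>) (Theta s \<omega>)"
    and dens: "is_density MZ q"
    and Z_cond: "\<And>A B. A \<in> past_events M (Theta 0) MZ Z t \<Longrightarrow> B \<in> sets MZ \<Longrightarrow>
      emeasure M (A \<inter> (Z t -` B \<inter> space M)) = emeasure M A * (\<integral>\<^sup>+ z\<in>B. ennreal (q z) \<partial>MZ)"
    and f_meas: "f \<in> borel_measurable borel"
  shows "(\<integral>\<^sup>+ \<omega>. f (Theta (Suc t) \<omega>) \<partial>M) = (\<integral>\<^sup>+ \<omega>. (\<integral>\<^sup>+ z. ennreal (q z) * f (F t z (Theta t \<omega>)) \<partial>MZ) \<partial>M)"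
    and "(\<lambda>\<omega>. \<integral>\<^sup>+ z. ennreal (q z) * f (F t z (Theta t \<omega>)) \<partial>MZ) \<in> borel_measurable M"
proof -
  define P where "P = density MZ (\<lambda>z. ennreal (q z))"
  define h where "h x = f (F t (snd x) (fst x))" for x
  have q_meas [measurable]: "q \<in> borel_measurable MZ"
    by (rule is_densityD(1)[OF dens])
  have sets_P: "sets P = sets MZ"
    by (simp add: P_def)
  have "(\<lambda>x. F t (snd x) (fst x)) \<in> borel_measurable (borel \<Otimes>\<^sub>M MZ)"
    using measurable_compose[OF measurable_Pair[OF measurable_snd measurable_fst] F_meas[of t]] by simp
  then have h_meas: "h \<in> borel_measurable (borel \<Otimes>\<^sub>M MZ)"
    unfolding h_def by (rule measurable_compose[OF _ f_meas])
  have h_P: "(\<integral>\<^sup>+ z. h (\<theta>, z) \<partial>P) = (\<integral>\<^sup>+ z. ennreal (q z) * f (F t z \<theta>) \<partial>MZ)" for \<theta>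
  proof -
    have "(\<integral>\<^sup>+ z. h (\<theta>, z) \<partial>P) = (\<integral>\<^sup>+ z. ennreal (q z) * h (\<theta>, z) \<partial>MZ)"
      unfolding P_def by (rule nn_integral_density) (measurable, rule measurable_Pair2[OF h_meas], simp)
    then show ?thesis
      by (simp add: h_def)
  qed
  have indep: "emeasure M ((Theta t -` A \<inter> space M) \<inter> (Z t -` B \<inter> space M))
      = emeasure M (Theta t -` A \<inter> space M) * emeasure P B" if "A \<in> sets borel" "B \<in> sets MZ" for A B
  proof -
    have "emeasure P B = (\<integral>\<^sup>+ z\<in>B. ennreal (q z) \<partial>MZ)"
      unfolding P_def by (rule emeasure_density) (measurable, fact)
    then show ?thesis
      using Z_cond[OF iterate_past_events[where Z=Z and F=F and Theta=Theta, OF Z_meas F_meas step that(1)] that(2)]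
      by simp
  qed
  note pair = nn_integral_independent_pair[OF \<open>prob_space M\<close>
      measurable_iterate[where Z=Z and F=F and Theta=Theta, OF \<open>Theta 0 \<in> borel_measurable M\<close> Z_meas F_meas step] Z_meas
      prob_space_density_is_density[OF dens, folded P_def] sets_P indep h_meas]
  show "(\<integral>\<^sup>+ \<omega>. f (Theta (Suc t) \<omega>) \<partial>M) = (\<integral>\<^sup>+ \<omega>. (\<integral>\<^sup>+ z. ennreal (q z) * f (F t z (Theta t \<omega>)) \<partial>MZ) \<partial>M)"
  proof -
    have "(\<integral>\<^sup>+ \<omega>. f (Theta (Suc t) \<omega>) \<partial>M) = (\<integral>\<^sup>+ \<omega>. h (Theta t \<omega>, Z t \<omega>) \<partial>M)"
      by (simp only: h_def step fst_conv snd_conv)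
    also have "\<dots> = (\<integral>\<^sup>+ \<omega>. (\<integral>\<^sup>+ z. h (Theta t \<omega>, z) \<partial>P) \<partial>M)"
      by (rule pair(1))
    finally show ?thesis
      by (simp only: h_P)
  qed
  show "(\<lambda>\<omega>. \<integral>\<^sup>+ z. ennreal (q z) * f (F t z (Theta t \<omega>)) \<partial>MZ) \<in> borel_measurable M"
    using pair(2) by (simp only: h_P)
qed

lemma nn_integral_iterate_descent:
  fixes Theta :: "nat \<Rightarrow> 'w \<Rightarrow> 'a::topological_space" and f g :: "'a \<Rightarrow> ennreal"
  assumes "prob_space M" and "Theta 0 \<in> borel_measurable M" and "\<And>s. Z s \<in> measurable M MZ"
    and "\<And>s. (\<lambda>x. F s (fst x) (snd x)) \<in> borel_measurable (MZ \<Otimes>\<^sub>M borel)"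
    and "\<And>s \<omega>. Theta (Suc s) \<omega> = F s (Z s \<omega>) (Theta s \<omega>)"
    and "is_density MZ q"
    and "\<And>A B. A \<in> past_events M (Theta 0) MZ Z t \<Longrightarrow> B \<in> sets MZ \<Longrightarrow>
      emeasure M (A \<inter> (Z t -` B \<inter> space M)) = emeasure M A * (\<integral>\<^sup>+ z\<in>B. ennreal (q z) \<partial>MZ)"
    and f_meas: "f \<in> borel_measurable borel" and g_meas: "g \<in> borel_measurable borel"
    and descent: "\<And>\<theta>. (\<integral>\<^sup>+ z. ennreal (q z) * f (F t z \<theta>) \<partial>MZ) + g \<theta> \<le> f \<theta> + C"
  shows "(\<integral>\<^sup>+ \<omega>. f (Theta (Suc t) \<omega>) \<partial>M) + (\<integral>\<^sup>+ \<omega>. g (Theta t \<omega>) \<partial>M) \<le> (\<integral>\<^sup>+ \<omega>. f (Theta t \<omega>) \<partial>M) + C"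
proof -
  interpret prob_space M
    by fact
  note [measurable] = f_meas g_meas
  have [measurable]: "Theta t \<in> borel_measurable M"
    by (rule measurable_iterate[where Z=Z and F=F and Theta=Theta, OF assms(2-5)])
  note step = nn_integral_iterate_step[where Z=Z and F=F and Theta=Theta and t=t, OF assms(1-6) _ f_meas]
  have [measurable]: "(\<lambda>\<omega>. \<integral>\<^sup>+ z. ennreal (q z) * f (F t z (Theta t \<omega>)) \<partial>MZ) \<in> borel_measurable M"
    by (rule step(2)) (simp add: assms(7))
  have "(\<integral>\<^sup>+ \<omega>. f (Theta (Suc t) \<omega>) \<partial>M)
      = (\<integral>\<^sup>+ \<omega>. (\<integral>\<^sup>+ z. ennreal (q z) * f (F t z (Theta t \<omega>)) \<partial>MZ) \<partial>M)"
    by (rule step(1)) (simp add: assms(7))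
  then have "(\<integral>\<^sup>+ \<omega>. f (Theta (Suc t) \<omega>) \<partial>M) + (\<integral>\<^sup>+ \<omega>. g (Theta t \<omega>) \<partial>M)
      = (\<integral>\<^sup>+ \<omega>. (\<integral>\<^sup>+ z. ennreal (q z) * f (F t z (Theta t \<omega>)) \<partial>MZ) \<partial>M) + (\<integral>\<^sup>+ \<omega>. g (Theta t \<omega>) \<partial>M)"
    by simp
  also have "\<dots> = (\<integral>\<^sup>+ \<omega>. (\<integral>\<^sup>+ z. ennreal (q z) * f (F t z (Theta t \<omega>)) \<partial>MZ) + g (Theta t \<omega>) \<partial>M)"
    by (rule nn_integral_add[symmetric]) measurable
  also have "\<dots> \<le> (\<integral>\<^sup>+ \<omega>. f (Theta t \<omega>) + C \<partial>M)"
    by (intro nn_integral_mono descent)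
  also have "\<dots> = (\<integral>\<^sup>+ \<omega>. f (Theta t \<omega>) \<partial>M) + (\<integral>\<^sup>+ \<omega>. C \<partial>M)"
    by (rule nn_integral_add) measurable
  also have "(\<integral>\<^sup>+ \<omega>. C \<partial>M) = C"
    by (simp add: emeasure_space_1)
  finally show ?thesis .
qed

theorem lemma2:
  fixes M :: "'w measure" and MZ :: "'z measure"
    and l :: "'z \<Rightarrow> 'a::euclidean_space \<Rightarrow> real" and gl :: "'z \<Rightarrow> 'a \<Rightarrow> 'a"
    and p :: "nat \<Rightarrow> 'z \<Rightarrow> real" and pstar :: "'z \<Rightarrow> real"
    and gL :: "'a \<Rightarrow> 'a" and L G :: real and eta :: "nat \<Rightarrow> real"
    and Theta :: "nat \<Rightarrow> 'w \<Rightarrow> 'a" and Z :: "nat \<Rightarrow> 'w \<Rightarrow> 'z" and t :: nat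
  assumes prob: "prob_space M"
    and l_nonneg: "\<And>z \<theta>. 0 \<le> l z \<theta>"
    and l_meas: "\<And>\<theta>. (\<lambda>z. l z \<theta>) \<in> borel_measurable MZ"
    and l_grad: "\<And>z \<theta>. (l z has_derivative (\<lambda>h. gl z \<theta> \<bullet> h)) (at \<theta>)"
    and dens: "\<And>s. is_density MZ (p s)" and dens_star: "is_density MZ pstar"
    and risk_finite: "\<And>\<theta>. integrable MZ (\<lambda>z. l z \<theta> * pstar z)"
    and A1_diff: "\<And>\<theta>. (risk l MZ pstar has_derivative (\<lambda>h. gL \<theta> \<bullet> h)) (at \<theta>)"
    and A1_lip: "L-lipschitz_on UNIV gL"
    and G_pos: "G > 0"
    and A3: "\<And>s \<theta>. (\<integral>\<^sup>+ z. ennreal ((norm (gl z \<theta>))\<^sup>2 * p s z) \<partial>MZ) \<le> ennreal G"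
    and A4: "summable (\<lambda>s. l1_dist MZ (p s) pstar)"
    and eta_pos: "\<And>s. eta s > 0"
    and Theta0_meas: "Theta 0 \<in> borel_measurable M"
    and Z_meas: "\<And>s. Z s \<in> measurable M MZ"
    and Theta_step: "\<And>s \<omega>. Theta (Suc s) \<omega> = Theta s \<omega> - eta s *\<^sub>R gl (Z s \<omega>) (Theta s \<omega>)"
    and Z_cond: "\<And>s A B. A \<in> past_events M (Theta 0) MZ Z s \<Longrightarrow> B \<in> sets MZ \<Longrightarrow>
        emeasure M (A \<inter> (Z s -` B \<inter> space M)) = emeasure M A * (\<integral>\<^sup>+ z\<in>B. ennreal (p s z) \<partial>MZ)"
  shows "(\<integral>\<^sup>+ \<omega>. ennreal (risk l MZ pstar (Theta (Suc t) \<omega>)) \<partial>M)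
           + ennreal (eta t) * (\<integral>\<^sup>+ \<omega>. ennreal ((norm (gL (Theta t \<omega>)))\<^sup>2) \<partial>M)
         \<le> (\<integral>\<^sup>+ \<omega>. ennreal (risk l MZ pstar (Theta t \<omega>)) \<partial>M)
           + ennreal (eta t * (sqrt 2 * G * sqrt (l1_dist MZ (p t) pstar)))
           + ennreal (L * G / 2 * (eta t)\<^sup>2)"
proof -
  have F_meas: "(\<lambda>x. snd x - eta s *\<^sub>R gl (fst x) (snd x)) \<in> borel_measurable (MZ \<Otimes>\<^sub>M borel)" for s
    by (intro borel_measurable_diff borel_measurable_scaleR measurable_snd borel_measurable_const
        borel_measurable_gradient[OF l_meas l_grad])
  have risk_meas: "risk l MZ pstar \<in> borel_measurable borel"
    by (intro borel_measurable_continuous_onI continuous_at_imp_continuous_on ballI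
        has_derivative_continuous[OF A1_diff])
  have [measurable]: "gL \<in> borel_measurable borel"
    by (intro borel_measurable_continuous_onI lipschitz_on_continuous_on[OF A1_lip])
  have [measurable]: "Theta t \<in> borel_measurable M"
    by (rule measurable_iterate[where F="\<lambda>s z \<theta>. \<theta> - eta s *\<^sub>R gl z \<theta>", OF Theta0_meas Z_meas F_meas Theta_step])
  have [measurable]: "(\<lambda>z. gl z \<theta>) \<in> borel_measurable MZ" for \<theta>
    by (rule borel_measurable_gradient_at[OF l_meas l_grad])
  have sq_star: "(\<integral>\<^sup>+ z. ennreal ((norm (gl z \<theta>))\<^sup>2 * pstar z) \<partial>MZ) \<le> ennreal G" for \<theta>
    by (rule nn_integral_density_le_of_l1_dist_tendsto[OF _ _ dens dens_star A3 _ summable_LIMSEQ_zero[OF A4]])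
      (use G_pos in simp_all)
  have "(\<integral>\<^sup>+ \<omega>. ennreal (risk l MZ pstar (Theta (Suc t) \<omega>)) \<partial>M)
      + (\<integral>\<^sup>+ \<omega>. ennreal (eta t) * ennreal ((norm (gL (Theta t \<omega>)))\<^sup>2) \<partial>M)
    \<le> (\<integral>\<^sup>+ \<omega>. ennreal (risk l MZ pstar (Theta t \<omega>)) \<partial>M)
      + (ennreal (eta t * (sqrt 2 * G * sqrt (l1_dist MZ (p t) pstar))) + ennreal (L * G / 2 * (eta t)\<^sup>2))"
    by (rule nn_integral_iterate_descent[where F="\<lambda>s z \<theta>. \<theta> - eta s *\<^sub>R gl z \<theta>"
          and f="\<lambda>\<theta>. ennreal (risk l MZ pstar \<theta>)" and g="\<lambda>\<theta>. ennreal (eta t) * ennreal ((norm (gL \<theta>))\<^sup>2)",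
          OF prob Theta0_meas Z_meas F_meas Theta_step dens[of t] _ measurable_compose[OF risk_meas measurable_ennreal] _
          risk_after_step_bound[OF l_nonneg l_meas l_grad dens[of t] dens_star risk_finite A1_diff A1_lip
            A3[where s=t] sq_star less_imp_le[OF G_pos] eta_pos[of t]]])
      (simp add: Z_cond, measurable)
  moreover have "(\<integral>\<^sup>+ \<omega>. ennreal (eta t) * ennreal ((norm (gL (Theta t \<omega>)))\<^sup>2) \<partial>M)
      = ennreal (eta t) * (\<integral>\<^sup>+ \<omega>. ennreal ((norm (gL (Theta t \<omega>)))\<^sup>2) \<partial>M)"
    by (rule nn_integral_cmult) measurable
  ultimately show ?thesis
    by (simp only: add.assoc)
qed

end
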